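(* Let $\Omega$ be a $\sigma$-compact metric space, $\nu$ a probability measure on the Borel $\sigma$-field of $\Omega$, and $\tau\mapsto\mathcal{D}_\tau\in\mathbb{R}^{m\times m\times p}$ a continuous map into TPSD T-product tensors with $\sup_{\tau}\|\mathcal{D}_\tau\|<\infty$ and $\int_\Omega\|\mathcal{D}_\tau^{-q}\|_1\,d\nu(\tau)<\infty$ for every $q>0$. Then $$\lim_{q\to 0^+}\frac{1}{q}\log\int_\Omega\frac{\|\mathcal{D}_\tau^{-q}\|_1}{mp}\,d\nu(\tau)=-\frac{1}{mp}\int_\Omega\log\det(\mathcal{D}_\tau)\,d\nu(\tau).$$
   Context: For a square $\mathcal{C}\in\mathbb{C}^{m\times m\times p}$, $\mathrm{bcirc}(\mathcal{C})=(F_p^H\otimes I_m)\mathrm{Diag}(C_1,\dots,C_p)(F_p\otimes I_m)$ with $F_p$ the normalized $p\times p$ DFT matrix and $\mathrm{bcirc}(\mathcal{C})$ the block-circulant matrix of the frontal slices; $C_1,\dots,C_p$ are the Fourier blocks (Hermitian if $\mathcal{C}$ is symmetric, i.e. $\mathcal{C}=\mathrm{bcirc}^{-1}(\mathrm{bcirc}(\mathcal{C})^T)$). The T-eigenvalues of a symmetric tensor are the $mp$ eigenvalues of $C_1,\dots,C_p$ (with multiplicity); TPSD (TPD) means all T-eigenvalues $\ge0$ ($>0$). $\det(\mathcal{C})$ is the product of all $mp$ T-eigenvalues. For TPD $\mathcal{D}$, $\mathcal{D}^{-q}$ is the tensor with Fourier blocks $D_i^{-q}$; $\|\mathcal{D}_\tau^{-q}\|_1:=+\infty$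 if $\mathcal{D}_\tau$ is not TPD. $\|\cdot\|_1$ is the trace norm (sum of all $mp$ T-singular values, i.e. singular values of the Fourier blocks) and $\|\cdot\|$ the operator norm (largest T-singular value). *)

theory Defs
  imports "HOL-Probability.Probability_Measure" "Jordan_Normal_Form.Char_Poly" "Jordan_Normal_Form.Schur_Decomposition"
begin

text \<open>A real third-order tensor in R^(m x m x p) is represented by its frontal slices
  D 0, ..., D (p-1), each a real m x m matrix.\<close>

definition tensor :: "nat \<Rightarrow> nat \<Rightarrow> (nat \<Rightarrow> real mat) \<Rightarrow> bool" where
  "tensor m p D \<longleftrightarrow> (\<forall>j<p. D j \<in> carrier_mat m m)"

text \<open>The block-circulant matrix of the frontal slices: block (r,s) is D ((r - s) mod p).\<close>
definition bcirc :: "nat \<Rightarrow> nat \<Rightarrow> (nat \<Rightarrow> real mat) \<Rightarrow> real mat" where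
  "bcirc m p D = Matrix.mat (m*p) (m*p)
     (\<lambda>(r,s). D ((r div m + p - s div m) mod p) $$ (r mod m, s mod m))"

text \<open>Symmetric tensor: C = bcirc^{-1}(bcirc(C)^T), i.e. bcirc(C) is symmetric.\<close>
definition tsym :: "nat \<Rightarrow> nat \<Rightarrow> (nat \<Rightarrow> real mat) \<Rightarrow> bool" where
  "tsym m p D \<longleftrightarrow> transpose_mat (bcirc m p D) = bcirc m p D"

text \<open>Fourier blocks C_k = sum_j omega^(jk) D_j, omega = exp(-2 pi i/p); these are the
  diagonal blocks of (F_p \<otimes> I_m) bcirc(D) (F_p^H \<otimes> I_m).\<close>
definition fblock :: "nat \<Rightarrow> nat \<Rightarrow> (nat \<Rightarrow> real mat) \<Rightarrow> nat \<Rightarrow> complex mat" where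
  "fblock m p D k = Matrix.mat m m
     (\<lambda>(a,b). \<Sum>j<p. cis (- 2 * pi * real j * real k / real p) * complex_of_real (D j $$ (a,b)))"

definition eig_mset :: "complex mat \<Rightarrow> complex multiset" where
  "eig_mset A = Abs_multiset (\<lambda>x. Polynomial.order x (char_poly A))"

definition sing_mset :: "complex mat \<Rightarrow> real multiset" where
  "sing_mset A = image_mset (\<lambda>x. sqrt (Re x)) (eig_mset (mat_adjoint A * A))"

definition teig :: "nat \<Rightarrow> nat \<Rightarrow> (nat \<Rightarrow> real mat) \<Rightarrow> complex multiset" where
  "teig m p D = (\<Sum>k<p. eig_mset (fblock m p D k))"

definition TPSD :: "nat \<Rightarrow> nat \<Rightarrow> (nat \<Rightarrow> real mat) \<Rightarrow> bool" where
  "TPSD m p D \<longleftrightarrow> tensor m p D \<and> tsym m p D \<and>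
     (\<forall>z\<in>#teig m p D. z \<in> \<real> \<and> 0 \<le> Re z)"

definition TPD :: "nat \<Rightarrow> nat \<Rightarrow> (nat \<Rightarrow> real mat) \<Rightarrow> bool" where
  "TPD m p D \<longleftrightarrow> tensor m p D \<and> tsym m p D \<and>
     (\<forall>z\<in>#teig m p D. z \<in> \<real> \<and> 0 < Re z)"

definition tdet :: "nat \<Rightarrow> nat \<Rightarrow> (nat \<Rightarrow> real mat) \<Rightarrow> complex" where
  "tdet m p D = prod_mset (teig m p D)"

definition tsing :: "nat \<Rightarrow> nat \<Rightarrow> (nat \<Rightarrow> real mat) \<Rightarrow> real multiset" where
  "tsing m p D = (\<Sum>k<p. sing_mset (fblock m p D k))"

definition tnorm_op :: "nat \<Rightarrow> nat \<Rightarrow> (nat \<Rightarrow> real mat) \<Rightarrow> real" where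
  "tnorm_op m p D = Max (set_mset (tsing m p D))"

definition unitary_mat :: "complex mat \<Rightarrow> bool" where
  "unitary_mat U \<longleftrightarrow> (\<exists>n. U \<in> carrier_mat n n \<and> mat_adjoint U * U = 1\<^sub>m n)"

definition mat_powr :: "complex mat \<Rightarrow> real \<Rightarrow> complex mat" where
  "mat_powr A r = (SOME B. \<exists>U d. U \<in> carrier_mat (dim_row A) (dim_row A) \<and> unitary_mat U \<and>
      (\<forall>i<dim_row A. 0 < d i) \<and>
      A = U * mat_diag (dim_row A) (\<lambda>i. complex_of_real (d i)) * mat_adjoint U \<and>
      B = U * mat_diag (dim_row A) (\<lambda>i. complex_of_real (d i powr r)) * mat_adjoint U)"

text \<open>Trace norm of the tensor D^{-q} (Fourier blocks D_i^{-q}): sum of all singular values of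
  its Fourier blocks; set to +infinity if D is not TPD.\<close>
definition tnorm1_negpow :: "nat \<Rightarrow> nat \<Rightarrow> (nat \<Rightarrow> real mat) \<Rightarrow> real \<Rightarrow> ennreal" where
  "tnorm1_negpow m p D q =
     (if TPD m p D then ennreal (\<Sum>k<p. sum_mset (sing_mset (mat_powr (fblock m p D k) (- q))))
      else \<infinity>)"

end

theory Submission
  imports Defs
begin

(* The Fourier blocks of a symmetric tensor are Hermitian, so everything in the statement depends
   on D tau only through its multiset Lambda(tau) of mp real T-eigenvalues: ||D^-q||_1 / (mp) is
   the mean h_q of lambda^-q over Lambda(tau), and log det D / (mp) is the mean L of log lambda.
   For E(q) = int h_q dnu, Jensen's inequality for exp (over Lambda(tau), then over nu) gives
   E(q) >= exp (-q int L), while ln E <= E - 1 gives ln E(q) / q <= int (h_q - 1) / q.  The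
   integrand (h_q - 1) / q tends to -L pointwise and, for q <= 1, is dominated by h_1 + ln M,
   where M bounds the operator norm; dominated convergence then squeezes ln E(q) / q to -int L.
   Measurability of these spectral functionals comes from continuity of D: power sums of the
   eigenvalues are traces of powers of the Fourier blocks, and Weierstrass approximation does
   the rest. *)

section \<open>Unitary diagonalization of Hermitian matrices\<close>

lemma mat_adjoint_dim [simp]:
  "dim_row (mat_adjoint A) = dim_col A" "dim_col (mat_adjoint A) = dim_row A"
  unfolding mat_adjoint_def by (auto simp: mat_of_rows_def)

lemma mat_adjoint_index [simp]:
  fixes A :: "complex mat"
  shows "i < dim_col A \<Longrightarrow> j < dim_row A \<Longrightarrow> mat_adjoint A $$ (i,j) = cnj (A $$ (j,i))"
  unfolding mat_adjoint_def by (simp add: mat_of_rows_def)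

lemma mat_adjoint_carrier [simp]: "A \<in> carrier_mat r c \<Longrightarrow> mat_adjoint A \<in> carrier_mat c r"
  unfolding carrier_mat_def by simp

lemma mat_adjoint_adjoint [simp]: "mat_adjoint (mat_adjoint (A :: complex mat)) = A"
  by (rule eq_matI) auto

lemma mat_adjoint_one [simp]: "mat_adjoint (1\<^sub>m n :: complex mat) = 1\<^sub>m n"
  by (rule eq_matI) auto

lemma mat_adjoint_mult:
  fixes A B :: "complex mat"
  assumes "A \<in> carrier_mat r k" "B \<in> carrier_mat k c"
  shows "mat_adjoint (A * B) = mat_adjoint B * mat_adjoint A"
  using assms by (intro eq_matI) (auto simp: scalar_prod_def mult.commute)

lemma mat_adjoint_diag_real:
  "mat_adjoint (mat_diag n (\<lambda>i. complex_of_real (d i))) = mat_diag n (\<lambda>i. complex_of_real (d i))"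
  by (rule eq_matI) (auto simp: mat_diag_def)

lemma index_mult_mat_sum:
  assumes "A \<in> carrier_mat r k" "B \<in> carrier_mat k c" "i < r" "j < c"
  shows "(A * B) $$ (i,j) = (\<Sum>l<k. A $$ (i,l) * B $$ (l,j))"
  using assms by (auto simp: scalar_prod_def intro!: sum.cong)

lemma index_mult_diag_adjoint:
  fixes U :: "complex mat"
  assumes U: "U \<in> carrier_mat r n" and i: "i < r" and j: "j < r"
  shows "(U * mat_diag n f * mat_adjoint U) $$ (i,j) = (\<Sum>k<n. U $$ (i,k) * f k * cnj (U $$ (j,k)))"
proof -
  have "U * mat_diag n f = Matrix.mat r n (\<lambda>(i,j). U $$ (i,j) * f j)"
    by (rule mat_diag_mult_right[OF U])
  then show ?thesis using U i j
    by (subst index_mult_mat_sum[of _ r n _ r]) auto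
qed

lemma index_adjoint_mult:
  fixes U :: "complex mat"
  assumes U: "U \<in> carrier_mat r n" and i: "i < n" and j: "j < n"
  shows "(mat_adjoint U * U) $$ (i,j) = (\<Sum>k<r. cnj (U $$ (k,i)) * U $$ (k,j))"
  using assms by (subst index_mult_mat_sum[of _ n r _ n]) auto

definition unitary :: "nat \<Rightarrow> complex mat \<Rightarrow> bool" where
  "unitary n U \<longleftrightarrow> U \<in> carrier_mat n n \<and> mat_adjoint U * U = 1\<^sub>m n"

lemma unitary_mat_iff_unitary: "U \<in> carrier_mat n n \<Longrightarrow> unitary_mat U \<longleftrightarrow> unitary n U"
  unfolding unitary_mat_def unitary_def by auto

lemma unitary_mult_adjoint: assumes "unitary n U" shows "U * mat_adjoint U = 1\<^sub>m n"
  using assms mat_mult_left_right_inverse[of "mat_adjoint U" n U] unfolding unitary_def by auto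

lemma unitary_mult: assumes "unitary n U" "unitary n V" shows "unitary n (U * V)"
proof -
  have U: "U \<in> carrier_mat n n" and UU: "mat_adjoint U * U = 1\<^sub>m n"
    and V: "V \<in> carrier_mat n n" and VV: "mat_adjoint V * V = 1\<^sub>m n"
    using assms unfolding unitary_def by auto
  have "mat_adjoint (U * V) * (U * V) = mat_adjoint V * (mat_adjoint U * U) * V"
    using U V by (simp add: mat_adjoint_mult[OF U V] assoc_mult_mat[of _ n n _ n _ n]
        mult_carrier_mat[of _ n n _ n])
  also have "\<dots> = 1\<^sub>m n" using UU V VV by simp
  finally show ?thesis using U V unfolding unitary_def by auto
qed

lemma cscalar_prod_self_pos:
  fixes u :: "complex vec"
  assumes "u \<in> carrier_vec n" "u \<noteq> 0\<^sub>v n"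
  shows "u \<bullet>c u = complex_of_real (Re (u \<bullet>c u))" "Re (u \<bullet>c u) > 0"
proof -
  have ge: "u \<bullet>c u \<ge> 0" by (rule conjugate_square_ge_0_vec)
  have ne: "u \<bullet>c u \<noteq> 0" using assms by simp
  from ge show "u \<bullet>c u = complex_of_real (Re (u \<bullet>c u))"
    by (simp add: less_eq_complex_def complex_eq_iff)
  from ge ne show "Re (u \<bullet>c u) > 0"
    by (auto simp: less_eq_complex_def complex_eq_iff)
qed

lemma unitary_normalized_columns:
  fixes us :: "complex vec list"
  assumes orth: "corthogonal us" and len: "length us = n" and usc: "set us \<subseteq> carrier_vec n"
  shows "unitary n (Matrix.mat n n (\<lambda>(a,i). complex_of_real (1 / sqrt (Re (us ! i \<bullet>c us ! i))) * (us ! i) $ a))"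
    (is "unitary n ?W")
proof -
  define c where "c i = 1 / sqrt (Re (us ! i \<bullet>c us ! i))" for i
  define W where "W = Matrix.mat n n (\<lambda>(a,i). complex_of_real (c i) * (us ! i) $ a)"
  have W_eq: "?W = W" unfolding W_def c_def ..
  have W: "W \<in> carrier_mat n n" unfolding W_def by auto
  have usi: "i < n \<Longrightarrow> us ! i \<in> carrier_vec n" for i using usc len by auto
  have "mat_adjoint W * W = 1\<^sub>m n"
  proof (rule eq_matI)
    fix i j assume "i < dim_row (1\<^sub>m n)" and "j < dim_col (1\<^sub>m n)"
    then have i: "i < n" and j: "j < n" by auto
    have "(mat_adjoint W * W) $$ (i,j) = (\<Sum>k<n. cnj (W $$ (k,i)) * W $$ (k,j))"
      by (rule index_adjoint_mult[OF W i j])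
    also have "\<dots> = complex_of_real (c i * c j) * (\<Sum>k<n. (us ! j) $ k * cnj ((us ! i) $ k))"
      unfolding W_def using i j by (simp add: sum_distrib_left mult_ac)
    also have "(\<Sum>k<n. (us ! j) $ k * cnj ((us ! i) $ k)) = us ! j \<bullet>c us ! i"
      using usi[OF i] by (simp add: scalar_prod_def lessThan_atLeast0)
    finally have eq: "(mat_adjoint W * W) $$ (i,j) = complex_of_real (c i * c j) * (us ! j \<bullet>c us ! i)" .
    show "(mat_adjoint W * W) $$ (i,j) = 1\<^sub>m n $$ (i,j)"
    proof (cases "i = j")
      case True
      have "us ! i \<noteq> 0\<^sub>v n" using corthogonalD[OF orth, of i i] i len by auto
      from cscalar_prod_self_pos[OF usi[OF i] this]
      have r: "us ! i \<bullet>c us ! i = complex_of_real (Re (us ! i \<bullet>c us ! i))"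
        and p: "Re (us ! i \<bullet>c us ! i) > 0" by auto
      have "c i * c i * Re (us ! i \<bullet>c us ! i) = 1" unfolding c_def using p by (simp add: divide_simps)
      then have "complex_of_real (c i * c i) * (us ! i \<bullet>c us ! i) = 1"
        by (subst r) (metis of_real_1 of_real_mult)
      then show ?thesis using eq True i by simp
    next
      case False
      then have "us ! j \<bullet>c us ! i = 0" using corthogonalD[OF orth, of j i] i j len by auto
      then show ?thesis using eq False i j by simp
    qed
  qed (use W in auto)
  then show ?thesis using W unfolding unitary_def W_eq by blast
qed

text \<open>Gram--Schmidt applied to a basis completion of \<open>v\<close>, followed by normalization.\<close>

lemma unitary_with_first_column:
  fixes v :: "complex vec"
  assumes v: "v \<in> carrier_vec n" and v1: "v \<bullet>c v = 1"
  shows "\<exists>W. unitary n W \<and> col W 0 = v"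
proof -
  have v0: "v \<noteq> 0\<^sub>v n" using v1 v by auto
  have n0: "n > 0"
    using v v1 by (cases n) (auto simp: scalar_prod_def)
  interpret cof_vec_space n "TYPE(complex)" .
  define b where "b = basis_completion v"
  from basis_completion[OF v v0, folded b_def]
  have dist_b: "distinct b" and indep: "\<not> lin_dep (set b)" and bc: "set b \<subseteq> carrier_vec n"
    and hdb: "hd b = v" and len_b: "length b = n" by auto
  from hdb len_b n0 obtain vs where bv: "b = v # vs" by (cases b) auto
  define us where "us = gram_schmidt n b"
  from gram_schmidt_result[OF bc dist_b indep us_def]
  have orth: "corthogonal us" and usc: "set us \<subseteq> carrier_vec n" and len: "length us = n"
    using len_b by auto
  have hd: "us ! 0 = v"
    using gram_schmidt_hd[OF v, of vs] len n0 unfolding us_def bv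
    by (metis bv hd_conv_nth len_b list.size(3) not_less0 us_def)
  define W where "W = Matrix.mat n n (\<lambda>(a,i). complex_of_real (1 / sqrt (Re (us ! i \<bullet>c us ! i))) * (us ! i) $ a)"
  have "col W 0 = v" unfolding W_def using n0 hd v v1 by (intro eq_vecI) auto
  then show ?thesis using unitary_normalized_columns[OF orth len usc, folded W_def] by blast
qed

lemma unit_eigenvector_exists:
  fixes A :: "complex mat"
  assumes A: "A \<in> carrier_mat (Suc n) (Suc n)"
  shows "\<exists>e v. v \<in> carrier_vec (Suc n) \<and> v \<bullet>c v = 1 \<and> A *\<^sub>v v = e \<cdot>\<^sub>v v"
proof -
  obtain as where cp: "char_poly A = (\<Prod>a\<leftarrow>as. [:- a, 1:])" and len: "length as = Suc n"
    using char_poly_factorized[OF A] by blast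
  then obtain e rest where as: "as = e # rest" by (cases as) auto
  have "poly (char_poly A) e = 0" unfolding cp as by simp
  then have ev: "eigenvalue A e" using eigenvalue_root_char_poly[OF A] by simp
  obtain w where "eigenvector A w e" using find_eigenvector[OF A ev] by blast
  then have w: "w \<in> carrier_vec (Suc n)" and w0: "w \<noteq> 0\<^sub>v (Suc n)" and Aw: "A *\<^sub>v w = e \<cdot>\<^sub>v w"
    unfolding eigenvector_def using A by auto
  have r: "w \<bullet>c w = complex_of_real (Re (w \<bullet>c w))" and p: "Re (w \<bullet>c w) > 0"
    using cscalar_prod_self_pos[OF w w0] by auto
  define c where "c = 1 / sqrt (Re (w \<bullet>c w))"
  define v where "v = complex_of_real c \<cdot>\<^sub>v w"
  have v: "v \<in> carrier_vec (Suc n)" unfolding v_def using w by simp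
  have "v \<bullet>c v = complex_of_real c * (cnj (complex_of_real c) * (w \<bullet>c w))"
    unfolding v_def using w by (simp add: conjugate_smult_vec)
  also have "\<dots> = complex_of_real (c * c * Re (w \<bullet>c w))" by (subst r) simp
  also have "c * c * Re (w \<bullet>c w) = 1" unfolding c_def using p by (simp add: divide_simps)
  finally have v1: "v \<bullet>c v = 1" by simp
  have "A *\<^sub>v v = e \<cdot>\<^sub>v v" unfolding v_def using A w Aw
    by (simp add: mult_mat_vec smult_smult_assoc mult.commute)
  with v v1 show ?thesis by blast
qed

lemma unitary_conj_eigenvector_column:
  fixes A W :: "complex mat"
  assumes A: "A \<in> carrier_mat n n" and uW: "unitary n W" and i: "i < n"
    and eigen: "A *\<^sub>v col W 0 = e \<cdot>\<^sub>v col W 0"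
  shows "(mat_adjoint W * (A * W)) $$ (i,0) = (if i = 0 then e else 0)"
proof -
  have W: "W \<in> carrier_mat n n" and WW: "mat_adjoint W * W = 1\<^sub>m n"
    using uW unfolding unitary_def by auto
  have AW: "(A * W) $$ (k,0) = e * W $$ (k,0)" if k: "k < n" for k
  proof -
    have "(A * W) $$ (k,0) = (A *\<^sub>v col W 0) $ k" using A W k i by simp
    then show ?thesis using eigen W k i by simp
  qed
  have "(mat_adjoint W * (A * W)) $$ (i,0) = (\<Sum>k<n. mat_adjoint W $$ (i,k) * (A * W) $$ (k,0))"
    using A W i by (intro index_mult_mat_sum[of _ n n]) auto
  also have "\<dots> = e * (\<Sum>k<n. mat_adjoint W $$ (i,k) * W $$ (k,0))"
    by (simp add: AW sum_distrib_left mult_ac)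
  also have "(\<Sum>k<n. mat_adjoint W $$ (i,k) * W $$ (k,0)) = (mat_adjoint W * W) $$ (i,0)"
    using W i by (intro index_mult_mat_sum[symmetric, of _ n n]) auto
  finally show ?thesis using WW i by simp
qed

definition one_plus_mat :: "nat \<Rightarrow> complex mat \<Rightarrow> complex mat" where
  "one_plus_mat n U = Matrix.mat (Suc n) (Suc n)
     (\<lambda>(i,j). if i = 0 \<and> j = 0 then 1 else if i = 0 \<or> j = 0 then 0 else U $$ (i - 1, j - 1))"

lemma unitary_one_plus_mat:
  assumes "unitary n U" shows "unitary (Suc n) (one_plus_mat n U)"
proof -
  have U: "U \<in> carrier_mat n n" and UU: "mat_adjoint U * U = 1\<^sub>m n"
    using assms unfolding unitary_def by auto
  define V where "V = one_plus_mat n U"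
  have V: "V \<in> carrier_mat (Suc n) (Suc n)" unfolding V_def one_plus_mat_def by simp
  have "mat_adjoint V * V = 1\<^sub>m (Suc n)"
  proof (rule eq_matI)
    fix i j assume "i < dim_row (1\<^sub>m (Suc n))" "j < dim_col (1\<^sub>m (Suc n))"
    then have i: "i < Suc n" and j: "j < Suc n" by auto
    have "(mat_adjoint V * V) $$ (i,j)
        = cnj (V $$ (0,i)) * V $$ (0,j) + (\<Sum>k<n. cnj (V $$ (Suc k,i)) * V $$ (Suc k,j))"
      unfolding index_adjoint_mult[OF V i j] by (rule sum.lessThan_Suc_shift)
    also have "\<dots> = 1\<^sub>m (Suc n) $$ (i,j)"
    proof (cases "i = 0 \<or> j = 0")
      case True
      then show ?thesis unfolding V_def one_plus_mat_def using i j by auto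
    next
      case False
      then obtain i' j' where ii: "i = Suc i'" and jj: "j = Suc j'" by (metis not0_implies_Suc)
      have i': "i' < n" and j': "j' < n" using i j ii jj by auto
      have "(\<Sum>k<n. cnj (V $$ (Suc k,i)) * V $$ (Suc k,j)) = (\<Sum>k<n. cnj (U $$ (k,i')) * U $$ (k,j'))"
        unfolding V_def one_plus_mat_def ii jj using i' j' by (intro sum.cong) auto
      also have "\<dots> = (mat_adjoint U * U) $$ (i',j')" by (rule index_adjoint_mult[OF U i' j', symmetric])
      finally show ?thesis using UU i' j' ii jj unfolding V_def one_plus_mat_def by simp
    qed
    finally show "(mat_adjoint V * V) $$ (i,j) = 1\<^sub>m (Suc n) $$ (i,j)" .
  qed (use V in auto)
  then show ?thesis using V unfolding unitary_def V_def by auto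
qed

definition lower_right_block :: "nat \<Rightarrow> complex mat \<Rightarrow> complex mat" where
  "lower_right_block n B = Matrix.mat n n (\<lambda>(i,j). B $$ (Suc i, Suc j))"

lemma hermitian_lower_right_block:
  assumes B: "B \<in> carrier_mat (Suc n) (Suc n)" and herm: "mat_adjoint B = B"
  shows "mat_adjoint (lower_right_block n B) = lower_right_block n B"
proof (rule eq_matI)
  fix i j assume "i < dim_row (lower_right_block n B)" "j < dim_col (lower_right_block n B)"
  then have i: "i < n" and j: "j < n" unfolding lower_right_block_def by auto
  have "mat_adjoint (lower_right_block n B) $$ (i,j) = mat_adjoint B $$ (Suc i, Suc j)"
    unfolding lower_right_block_def using B i j by simp
  then show "mat_adjoint (lower_right_block n B) $$ (i,j) = lower_right_block n B $$ (i,j)"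
    unfolding herm lower_right_block_def using i j by simp
qed (auto simp: lower_right_block_def)

lemma hermitian_deflated_diagonalization:
  fixes B U :: "complex mat"
  assumes B: "B \<in> carrier_mat (Suc n) (Suc n)" and herm: "mat_adjoint B = B"
    and col0: "\<And>i. i < Suc n \<Longrightarrow> B $$ (i,0) = (if i = 0 then e else 0)"
    and uU: "unitary n U"
    and block: "lower_right_block n B = U * mat_diag n (\<lambda>i. complex_of_real (d i)) * mat_adjoint U"
  shows "B = one_plus_mat n U * mat_diag (Suc n) (\<lambda>i. complex_of_real (if i = 0 then Re e else d (i - 1)))
    * mat_adjoint (one_plus_mat n U)"
    (is "B = ?V * mat_diag (Suc n) ?d * mat_adjoint ?V")
proof -
  have U: "U \<in> carrier_mat n n" using uU unfolding unitary_def by auto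
  have V: "?V \<in> carrier_mat (Suc n) (Suc n)" unfolding one_plus_mat_def by simp
  have row0: "B $$ (0,j) = (if j = 0 then cnj e else 0)" if j: "j < Suc n" for j
  proof -
    have "B $$ (0,j) = cnj (B $$ (j,0))" using B j by (subst herm[symmetric]) simp
    then show ?thesis using col0[OF j] by simp
  qed
  have e_real: "e = complex_of_real (Re e)"
    using row0[of 0] col0[of 0] by (simp add: complex_eq_iff)
  show ?thesis
  proof (rule eq_matI)
    fix i j assume "i < dim_row (?V * mat_diag (Suc n) ?d * mat_adjoint ?V)"
      "j < dim_col (?V * mat_diag (Suc n) ?d * mat_adjoint ?V)"
    then have i: "i < Suc n" and j: "j < Suc n" using V by auto
    have "(?V * mat_diag (Suc n) ?d * mat_adjoint ?V) $$ (i,j)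
        = ?V $$ (i,0) * ?d 0 * cnj (?V $$ (j,0)) + (\<Sum>k<n. ?V $$ (i,Suc k) * ?d (Suc k) * cnj (?V $$ (j,Suc k)))"
      unfolding index_mult_diag_adjoint[OF V i j] by (rule sum.lessThan_Suc_shift)
    also have "\<dots> = B $$ (i,j)"
    proof (cases "i = 0 \<or> j = 0")
      case True
      then show ?thesis using col0 row0 i j e_real unfolding one_plus_mat_def
        by (auto simp: complex_eq_iff)
    next
      case False
      then obtain i' j' where ii: "i = Suc i'" and jj: "j = Suc j'" by (metis not0_implies_Suc)
      have i': "i' < n" and j': "j' < n" using i j ii jj by auto
      have "(\<Sum>k<n. ?V $$ (i,Suc k) * ?d (Suc k) * cnj (?V $$ (j,Suc k)))
          = (\<Sum>k<n. U $$ (i',k) * complex_of_real (d k) * cnj (U $$ (j',k)))"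
        unfolding one_plus_mat_def ii jj using i' j' by (intro sum.cong) auto
      also have "\<dots> = lower_right_block n B $$ (i',j')"
        unfolding block by (rule index_mult_diag_adjoint[OF U i' j', symmetric])
      also have "\<dots> = B $$ (i,j)" unfolding lower_right_block_def ii jj using i' j' by simp
      finally show ?thesis unfolding one_plus_mat_def ii jj using i' j' by simp
    qed
    finally show "B $$ (i,j) = (?V * mat_diag (Suc n) ?d * mat_adjoint ?V) $$ (i,j)" by simp
  qed (use B V in auto)
qed

theorem hermitian_unitary_diagonalization:
  fixes A :: "complex mat"
  assumes "A \<in> carrier_mat n n" "mat_adjoint A = A"
  shows "\<exists>U d. unitary n U \<and> A = U * mat_diag n (\<lambda>i. complex_of_real (d i)) * mat_adjoint U"
  using assms
proof (induction n arbitrary: A)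
  case 0
  then have "A = 1\<^sub>m 0 * mat_diag 0 (\<lambda>i. complex_of_real 0) * mat_adjoint (1\<^sub>m 0)"
    by (intro eq_matI) auto
  moreover have "unitary 0 (1\<^sub>m 0)" unfolding unitary_def by simp
  ultimately show ?case by (intro exI[of _ "1\<^sub>m 0"] exI[of _ "\<lambda>_. 0"]) simp
next
  case (Suc n)
  have A: "A \<in> carrier_mat (Suc n) (Suc n)" and herm: "mat_adjoint A = A" using Suc.prems by auto
  obtain e v where v: "v \<in> carrier_vec (Suc n)" and v1: "v \<bullet>c v = 1" and Av: "A *\<^sub>v v = e \<cdot>\<^sub>v v"
    using unit_eigenvector_exists[OF A] by blast
  obtain W where uW: "unitary (Suc n) W" and Wv: "col W 0 = v"
    using unitary_with_first_column[OF v v1] by blast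
  have W: "W \<in> carrier_mat (Suc n) (Suc n)" using uW unfolding unitary_def by auto
  define B where "B = mat_adjoint W * (A * W)"
  have B: "B \<in> carrier_mat (Suc n) (Suc n)" unfolding B_def using A W by (meson mat_adjoint_carrier mult_carrier_mat)
  have hB: "mat_adjoint B = B"
    unfolding B_def using A W herm
    by (simp add: mat_adjoint_mult[of _ "Suc n" "Suc n" _ "Suc n"] assoc_mult_mat[of _ "Suc n" "Suc n" _ "Suc n" _ "Suc n"])
  have col0: "B $$ (i,0) = (if i = 0 then e else 0)" if "i < Suc n" for i
    unfolding B_def using unitary_conj_eigenvector_column[OF A uW that] Av Wv by simp
  obtain U' d' where uU': "unitary n U'"
    and B'eq: "lower_right_block n B = U' * mat_diag n (\<lambda>i. complex_of_real (d' i)) * mat_adjoint U'"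
    using Suc.IH[OF _ hermitian_lower_right_block[OF B hB]] by (auto simp: lower_right_block_def)
  define V where "V = one_plus_mat n U'"
  define Dg where "Dg = mat_diag (Suc n) (\<lambda>i. complex_of_real (if i = 0 then Re e else d' (i - 1)))"
  have Beq: "B = V * Dg * mat_adjoint V" unfolding V_def Dg_def
    by (rule hermitian_deflated_diagonalization[OF B hB col0 uU' B'eq])
  have uV: "unitary (Suc n) V" unfolding V_def by (rule unitary_one_plus_mat[OF uU'])
  then have V: "V \<in> carrier_mat (Suc n) (Suc n)" unfolding unitary_def by auto
  have Dg: "Dg \<in> carrier_mat (Suc n) (Suc n)" unfolding Dg_def by simp
  have "A = (W * mat_adjoint W) * A * (W * mat_adjoint W)" using unitary_mult_adjoint[OF uW] A by simp
  also have "\<dots> = W * B * mat_adjoint W" unfolding B_def using W A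
    by (simp add: assoc_mult_mat[of _ "Suc n" "Suc n" _ "Suc n" _ "Suc n"] mult_carrier_mat[of _ "Suc n" "Suc n" _ "Suc n"])
  also have "\<dots> = (W * V) * Dg * mat_adjoint (W * V)" unfolding Beq using W V Dg
    by (simp add: mat_adjoint_mult[OF W V] assoc_mult_mat[of _ "Suc n" "Suc n" _ "Suc n" _ "Suc n"]
        mult_carrier_mat[of _ "Suc n" "Suc n" _ "Suc n"])
  finally show ?case using unitary_mult[OF uW uV] unfolding Dg_def
    by (auto intro!: exI[of _ "W * V"] exI[of _ "\<lambda>i. if i = 0 then Re e else d' (i - 1)"])
qed

section \<open>Spectral quantities of Hermitian matrices\<close>

lemma order_prod_linear_factors:
  "Polynomial.order x (\<Prod>a\<leftarrow>xs. [:- a, 1:]) = count (mset xs) (x :: 'a :: idom)"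
proof (induction xs)
  case Nil
  then show ?case by (simp add: order_0I)
next
  case (Cons a xs)
  have "(\<Prod>a\<leftarrow>xs. [:- a, 1:]) \<noteq> 0"
    by (auto simp: prod_list_zero_iff)
  then have nz: "[:- a, 1:] * (\<Prod>a\<leftarrow>xs. [:- a, 1:]) \<noteq> 0"
    by (metis mult_eq_0_iff pCons_eq_0_iff one_neq_zero)
  have "(\<Prod>a\<leftarrow>a # xs. [:- a, 1:]) = [:- a, 1:] * (\<Prod>a\<leftarrow>xs. [:- a, 1:])" by simp
  then have "Polynomial.order x (\<Prod>a\<leftarrow>a # xs. [:- a, 1:])
      = Polynomial.order x [:- a, 1:] + Polynomial.order x (\<Prod>a\<leftarrow>xs. [:- a, 1:])"
    by (simp only: order_mult[OF nz])
  then show ?case using Cons by (simp add: order_linear')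
qed

lemma eig_mset_unitary_diag:
  assumes uU: "unitary n U"
  shows "eig_mset (U * mat_diag n g * mat_adjoint U) = image_mset g (mset_set {..<n})"
proof -
  have U: "U \<in> carrier_mat n n" and UU: "mat_adjoint U * U = 1\<^sub>m n" using uU unfolding unitary_def by auto
  define D where "D = mat_diag n g"
  have D: "D \<in> carrier_mat n n" unfolding D_def by simp
  have "similar_mat (U * D * mat_adjoint U) D"
    using U D UU unitary_mult_adjoint[OF uU]
    by (intro similar_matI[of _ _ U "mat_adjoint U" n]) auto
  then have "char_poly (U * D * mat_adjoint U) = char_poly D" by (rule char_poly_similar)
  also have "\<dots> = (\<Prod>a\<leftarrow>diag_mat D. [:- a, 1:])"
    by (rule char_poly_upper_triangular[OF D]) (auto simp: D_def upper_triangular_def mat_diag_def)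
  also have "diag_mat D = map g [0..<n]" unfolding D_def diag_mat_def mat_diag_def
    by (intro nth_equalityI) auto
  finally have cp: "char_poly (U * D * mat_adjoint U) = (\<Prod>a\<leftarrow>map g [0..<n]. [:- a, 1:])" .
  have "eig_mset (U * D * mat_adjoint U) = Abs_multiset (count (mset (map g [0..<n])))"
    unfolding eig_mset_def cp order_prod_linear_factors by simp
  then show ?thesis unfolding D_def by (simp add: count_inverse atLeast0LessThan)
qed

lemma unitary_diag_mult:
  assumes "unitary n U"
  shows "(U * mat_diag n f * mat_adjoint U) * (U * mat_diag n g * mat_adjoint U)
    = U * mat_diag n (\<lambda>i. f i * g i) * mat_adjoint U"
proof -
  have U: "U \<in> carrier_mat n n" and UU: "mat_adjoint U * U = 1\<^sub>m n" using assms unfolding unitary_def by auto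
  have F: "mat_diag n f \<in> carrier_mat n n" and G: "mat_diag n g \<in> carrier_mat n n" by auto
  have "(U * mat_diag n f * mat_adjoint U) * (U * mat_diag n g * mat_adjoint U)
      = U * mat_diag n f * (mat_adjoint U * U) * mat_diag n g * mat_adjoint U"
    using U F G by (simp add: mult_carrier_mat[of _ n n _ n] assoc_mult_mat[of _ n n _ n _ n])
  also have "\<dots> = U * (mat_diag n f * mat_diag n g) * mat_adjoint U" using U F G UU
    by (simp add: mult_carrier_mat[of _ n n _ n] assoc_mult_mat[of _ n n _ n _ n] left_mult_one_mat[of _ n n])
  finally show ?thesis by simp
qed

lemma unitary_diag_power:
  assumes uU: "unitary n U"
  shows "(U * mat_diag n g * mat_adjoint U) ^\<^sub>m j = U * mat_diag n (\<lambda>i. g i ^ j) * mat_adjoint U"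
proof (induction j)
  case 0
  have U: "U \<in> carrier_mat n n" using assms unfolding unitary_def by auto
  then show ?case using unitary_mult_adjoint[OF uU] by simp
next
  case (Suc j)
  then show ?case by (simp add: unitary_diag_mult[OF uU] mult.commute)
qed

lemma trace_unitary_diag:
  assumes uU: "unitary n U"
  shows "(\<Sum>i<n. (U * mat_diag n h * mat_adjoint U) $$ (i,i)) = (\<Sum>k<n. h k)"
proof -
  have U: "U \<in> carrier_mat n n" and UU: "mat_adjoint U * U = 1\<^sub>m n" using uU unfolding unitary_def by auto
  have "(\<Sum>i<n. (U * mat_diag n h * mat_adjoint U) $$ (i,i)) = (\<Sum>i<n. \<Sum>k<n. U $$ (i,k) * h k * cnj (U $$ (i,k)))"
    by (intro sum.cong refl index_mult_diag_adjoint[OF U]) auto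
  also have "\<dots> = (\<Sum>k<n. h k * (\<Sum>i<n. cnj (U $$ (i,k)) * U $$ (i,k)))"
    by (subst sum.swap) (simp add: sum_distrib_left mult_ac)
  also have "\<dots> = (\<Sum>k<n. h k * (mat_adjoint U * U) $$ (k,k))"
    by (intro sum.cong refl) (simp add: index_adjoint_mult[OF U])
  finally show ?thesis using UU by simp
qed

lemma sing_mset_unitary_diag:
  assumes uU: "unitary n U"
  shows "sing_mset (U * mat_diag n (\<lambda>i. complex_of_real (d i)) * mat_adjoint U) = image_mset (\<lambda>i. \<bar>d i\<bar>) (mset_set {..<n})"
proof -
  have U: "U \<in> carrier_mat n n" using uU unfolding unitary_def by auto
  have "mat_adjoint (U * mat_diag n (\<lambda>i. complex_of_real (d i)) * mat_adjoint U)
      = U * mat_diag n (\<lambda>i. complex_of_real (d i)) * mat_adjoint U"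
    using U by (simp add: mat_adjoint_mult[of _ n n _ n] mat_adjoint_diag_real mult_carrier_mat[of _ n n _ n]
        assoc_mult_mat[of _ n n _ n _ n])
  then show ?thesis unfolding sing_mset_def
    by (simp add: unitary_diag_mult[OF uU] eig_mset_unitary_diag[OF uU] multiset.map_comp o_def
        real_sqrt_mult_self del: of_real_mult flip: of_real_mult)
qed

text \<open>The choice in \<^const>\<open>mat_powr\<close> is harmless: any two spectral decompositions have the
  same eigenvalues, so the trace norm of \<open>A\<^sup>r\<close> does not depend on the choice.\<close>

lemma sum_sing_mset_mat_powr:
  assumes A: "A \<in> carrier_mat n n" and uU: "unitary n U"
    and Aeq: "A = U * mat_diag n (\<lambda>i. complex_of_real (d i)) * mat_adjoint U"
    and pos: "\<forall>i<n. 0 < d i"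
  shows "sum_mset (sing_mset (mat_powr A r)) = (\<Sum>i<n. d i powr r)"
proof -
  have dr: "dim_row A = n" using A by simp
  have U: "U \<in> carrier_mat n n" using uU unfolding unitary_def by auto
  have "\<exists>B U d. U \<in> carrier_mat n n \<and> unitary_mat U \<and> (\<forall>i<n. 0 < d i) \<and>
      A = U * mat_diag n (\<lambda>i. complex_of_real (d i)) * mat_adjoint U \<and>
      B = U * mat_diag n (\<lambda>i. complex_of_real (d i powr r)) * mat_adjoint U"
    using U uU pos Aeq unitary_mat_iff_unitary[OF U] by blast
  from someI_ex[OF this[folded dr]] obtain U' d' where U': "U' \<in> carrier_mat n n"
    and uU': "unitary_mat U'" and pos': "\<forall>i<n. 0 < d' i"
    and Aeq': "A = U' * mat_diag n (\<lambda>i. complex_of_real (d' i)) * mat_adjoint U'"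
    and Beq: "mat_powr A r = U' * mat_diag n (\<lambda>i. complex_of_real (d' i powr r)) * mat_adjoint U'"
    unfolding mat_powr_def dr by blast
  have uU'': "unitary n U'" using uU' unitary_mat_iff_unitary[OF U'] by simp
  have "eig_mset A = image_mset (\<lambda>i. complex_of_real (d i)) (mset_set {..<n})"
    using eig_mset_unitary_diag[OF uU] Aeq by simp
  moreover have "eig_mset A = image_mset (\<lambda>i. complex_of_real (d' i)) (mset_set {..<n})"
    using eig_mset_unitary_diag[OF uU''] Aeq' by simp
  ultimately have "sum_mset (image_mset (\<lambda>x. Re x powr r) (image_mset (\<lambda>i. complex_of_real (d i)) (mset_set {..<n})))
     = sum_mset (image_mset (\<lambda>x. Re x powr r) (image_mset (\<lambda>i. complex_of_real (d' i)) (mset_set {..<n})))"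
    by simp
  then have "(\<Sum>i<n. d i powr r) = (\<Sum>i<n. d' i powr r)"
    by (simp add: multiset.map_comp o_def flip: sum_unfold_sum_mset)
  then show ?thesis unfolding Beq sing_mset_unitary_diag[OF uU''] by (simp flip: sum_unfold_sum_mset)
qed

definition real_spectrum :: "complex mat \<Rightarrow> real multiset" where
  "real_spectrum A = image_mset Re (eig_mset A)"

context
  fixes A :: "complex mat" and n :: nat
  assumes A: "A \<in> carrier_mat n n" and herm: "mat_adjoint A = A"
begin

lemma hermitian_decomposition:
  obtains U d where "unitary n U" "A = U * mat_diag n (\<lambda>i. complex_of_real (d i)) * mat_adjoint U"
    "real_spectrum A = image_mset d (mset_set {..<n})"
proof -
  obtain U d where uU: "unitary n U" and Aeq: "A = U * mat_diag n (\<lambda>i. complex_of_real (d i)) * mat_adjoint U"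
    using hermitian_unitary_diagonalization[OF A herm] by blast
  then have "real_spectrum A = image_mset d (mset_set {..<n})"
    unfolding real_spectrum_def by (simp add: eig_mset_unitary_diag[OF uU] multiset.map_comp o_def)
  with uU Aeq that show ?thesis by blast
qed

lemma eig_mset_hermitian: "eig_mset A = image_mset complex_of_real (real_spectrum A)"
proof -
  obtain U d where uU: "unitary n U" and "A = U * mat_diag n (\<lambda>i. complex_of_real (d i)) * mat_adjoint U"
    and "real_spectrum A = image_mset d (mset_set {..<n})"
    by (rule hermitian_decomposition)
  then show ?thesis by (simp add: eig_mset_unitary_diag[OF uU] multiset.map_comp o_def)
qed

lemma size_real_spectrum: "size (real_spectrum A) = n"
  by (rule hermitian_decomposition) simp

lemma sing_mset_hermitian: "sing_mset A = image_mset abs (real_spectrum A)"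
proof -
  obtain U d where uU: "unitary n U" and "A = U * mat_diag n (\<lambda>i. complex_of_real (d i)) * mat_adjoint U"
    and "real_spectrum A = image_mset d (mset_set {..<n})"
    by (rule hermitian_decomposition)
  then show ?thesis by (simp add: sing_mset_unitary_diag[OF uU] multiset.map_comp o_def)
qed

lemma trace_power_hermitian:
  "Re (\<Sum>i<n. (A ^\<^sub>m j) $$ (i,i)) = sum_mset (image_mset (\<lambda>x. x ^ j) (real_spectrum A))"
proof -
  obtain U d where uU: "unitary n U" and Aeq: "A = U * mat_diag n (\<lambda>i. complex_of_real (d i)) * mat_adjoint U"
    and ev: "real_spectrum A = image_mset d (mset_set {..<n})"
    by (rule hermitian_decomposition)
  have "(\<Sum>i<n. (A ^\<^sub>m j) $$ (i,i)) = (\<Sum>k<n. complex_of_real (d k) ^ j)"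
    unfolding Aeq unitary_diag_power[OF uU] by (rule trace_unitary_diag[OF uU])
  then show ?thesis
    unfolding ev by (simp add: multiset.map_comp o_def flip: of_real_power sum_unfold_sum_mset)
qed

lemma sum_sing_mset_mat_powr_hermitian:
  assumes "\<forall>x\<in>#real_spectrum A. 0 < x"
  shows "sum_mset (sing_mset (mat_powr A r)) = sum_mset (image_mset (\<lambda>x. x powr r) (real_spectrum A))"
proof -
  obtain U d where uU: "unitary n U" and Aeq: "A = U * mat_diag n (\<lambda>i. complex_of_real (d i)) * mat_adjoint U"
    and ev: "real_spectrum A = image_mset d (mset_set {..<n})"
    by (rule hermitian_decomposition)
  have pos: "\<forall>i<n. 0 < d i" using assms unfolding ev by auto
  show ?thesis
    unfolding sum_sing_mset_mat_powr[OF A uU Aeq pos] ev by (simp add: multiset.map_comp o_def flip: sum_unfold_sum_mset)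
qed

end

section \<open>The T-spectrum of a symmetric tensor\<close>

lemma image_mset_sum: "image_mset f (\<Sum>a\<in>A. F a) = (\<Sum>a\<in>A. image_mset f (F a))"
  by (induction A rule: infinite_finite_induct) auto

lemma sum_mset_sum: "sum_mset (\<Sum>a\<in>A. F a) = (\<Sum>a\<in>A. sum_mset (F a))"
  by (induction A rule: infinite_finite_induct) auto

lemma fblock_carrier [simp]: "fblock m p D k \<in> carrier_mat m m"
  unfolding fblock_def by simp

lemma tsym_slice_transpose:
  assumes ts: "tsym m p D" and j: "j < p" and a: "a < m" and b: "b < m"
  shows "D j $$ (b,a) = D ((p - j) mod p) $$ (a,b)"
proof -
  have r: "j * m + b < m * p"
  proof -
    have "j * m + b < (j + 1) * m" using b by simp
    also have "\<dots> \<le> p * m" using j by (intro mult_le_mono1) simp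
    finally show ?thesis by (simp add: mult.commute)
  qed
  have s: "a < m * p" using a j by (simp add: less_le_trans[of a m])
  have dj: "(j * m + b) div m = j" "(j * m + b) mod m = b" using b by auto
  have "bcirc m p D $$ (j * m + b, a) = transpose_mat (bcirc m p D) $$ (j * m + b, a)"
    using ts unfolding tsym_def by simp
  also have "\<dots> = bcirc m p D $$ (a, j * m + b)" using r s unfolding bcirc_def by simp
  finally show ?thesis using r s j a b unfolding bcirc_def by (simp add: dj)
qed

lemma cis_minus_index_mod:
  assumes "j < p"
  shows "cis (- 2 * pi * real ((p - j) mod p) * real k / real p) = cis (2 * pi * real j * real k / real p)"
proof (cases "j = 0")
  case True then show ?thesis by simp
next
  case False
  have pj: "(p - j) mod p = p - j" using assms False by simp
  have eq: "- 2 * pi * real (p - j) * real k / real p = (- 2 * pi * real k) + 2 * pi * real j * real k / real p"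
    using assms by (simp add: of_nat_diff field_simps)
  have "cis (- 2 * pi * real (p - j) * real k / real p) = cis (- 2 * pi * real k) * cis (2 * pi * real j * real k / real p)"
    by (subst eq) (rule cis_mult[symmetric])
  also have "cis (- 2 * pi * real k) = 1" using cis_multiple_2pi[of "- real k"] by simp
  finally show ?thesis using pj by simp
qed

text \<open>Symmetry of the tensor means \<open>(D j)\<^sup>T = D ((p - j) mod p)\<close>; reindexing \<open>j \<mapsto> (p - j) mod p\<close>
  turns the conjugated Fourier sum back into the original one.\<close>

lemma mat_adjoint_fblock:
  assumes ts: "tsym m p D"
  shows "mat_adjoint (fblock m p D k) = fblock m p D k"
proof (rule eq_matI)
  fix a b assume "a < dim_row (fblock m p D k)" "b < dim_col (fblock m p D k)"
  then have a: "a < m" and b: "b < m" unfolding fblock_def by auto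
  define \<sigma> where "\<sigma> j = (p - j) mod p" for j
  have "mat_adjoint (fblock m p D k) $$ (a,b)
      = cnj (\<Sum>j<p. cis (- 2 * pi * real j * real k / real p) * complex_of_real (D j $$ (b,a)))"
    using a b unfolding fblock_def by simp
  also have "\<dots> = (\<Sum>j<p. cis (2 * pi * real j * real k / real p) * complex_of_real (D (\<sigma> j) $$ (a,b)))"
    by (simp add: tsym_slice_transpose[OF ts _ a b] \<sigma>_def cis_cnj)
  also have "\<dots> = (\<Sum>j<p. cis (- 2 * pi * real j * real k / real p) * complex_of_real (D j $$ (a,b)))"
  proof -
    have "\<sigma> (\<sigma> j) = j" "\<sigma> j < p" if "j < p" for j
    proof -
      show "\<sigma> j < p" unfolding \<sigma>_def using that by simp
      show "\<sigma> (\<sigma> j) = j" using that unfolding \<sigma>_def by (cases "j = 0") auto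
    qed
    moreover have "cis (- 2 * pi * real (\<sigma> j) * real k / real p) = cis (2 * pi * real j * real k / real p)"
      if "j < p" for j
      unfolding \<sigma>_def by (rule cis_minus_index_mod[OF that])
    ultimately show ?thesis by (intro sum.reindex_bij_witness[of _ \<sigma> \<sigma>]) auto
  qed
  also have "\<dots> = fblock m p D k $$ (a,b)" using a b unfolding fblock_def by simp
  finally show "mat_adjoint (fblock m p D k) $$ (a,b) = fblock m p D k $$ (a,b)" .
qed (auto simp: fblock_def)

definition tspectrum :: "nat \<Rightarrow> nat \<Rightarrow> (nat \<Rightarrow> real mat) \<Rightarrow> real multiset" where
  "tspectrum m p D = (\<Sum>k<p. real_spectrum (fblock m p D k))"

context
  fixes m p :: nat and D :: "nat \<Rightarrow> real mat"
  assumes ts: "tsym m p D"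
begin

lemma teig_tspectrum: "teig m p D = image_mset complex_of_real (tspectrum m p D)"
  unfolding teig_def tspectrum_def image_mset_sum
  using eig_mset_hermitian[OF fblock_carrier mat_adjoint_fblock[OF ts]] by simp

lemma size_tspectrum: "size (tspectrum m p D) = m * p"
  unfolding tspectrum_def size_multiset_sum
  using size_real_spectrum[OF fblock_carrier mat_adjoint_fblock[OF ts]] by simp

lemma tsing_tspectrum: "tsing m p D = image_mset abs (tspectrum m p D)"
  unfolding tsing_def tspectrum_def image_mset_sum
  using sing_mset_hermitian[OF fblock_carrier mat_adjoint_fblock[OF ts]] by simp

lemma tdet_tspectrum: "Re (tdet m p D) = prod_mset (tspectrum m p D)"
  unfolding tdet_def teig_tspectrum by (simp add: of_real_hom.prod_mset_image)

lemma power_sum_tspectrum: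
  "sum_mset (image_mset (\<lambda>x. x ^ j) (tspectrum m p D))
    = (\<Sum>k<p. Re (\<Sum>i<m. (fblock m p D k ^\<^sub>m j) $$ (i,i)))"
  unfolding tspectrum_def image_mset_sum sum_mset_sum
  using trace_power_hermitian[OF fblock_carrier mat_adjoint_fblock[OF ts]] by simp

lemma TPSD_tspectrum_nonneg: "TPSD m p D \<Longrightarrow> x \<in># tspectrum m p D \<Longrightarrow> 0 \<le> x"
  unfolding TPSD_def teig_tspectrum by auto

lemma TPD_iff_tspectrum_pos: "tensor m p D \<Longrightarrow> TPD m p D \<longleftrightarrow> (\<forall>x\<in>#tspectrum m p D. 0 < x)"
  unfolding TPD_def teig_tspectrum using ts by auto

lemma tspectrum_le_tnorm_op:
  assumes "x \<in># tspectrum m p D" shows "x \<le> tnorm_op m p D"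
proof -
  have "\<bar>x\<bar> \<in># tsing m p D" unfolding tsing_tspectrum using assms by simp
  then have "\<bar>x\<bar> \<le> tnorm_op m p D" unfolding tnorm_op_def by (intro Max_ge) auto
  then show ?thesis by simp
qed

lemma tnorm1_negpow_tspectrum:
  assumes "tensor m p D"
  shows "tnorm1_negpow m p D q = (if \<forall>x\<in>#tspectrum m p D. 0 < x
     then ennreal (sum_mset (image_mset (\<lambda>x. x powr (- q)) (tspectrum m p D))) else \<infinity>)"
proof (cases "\<forall>x\<in>#tspectrum m p D. 0 < x")
  case True
  have "\<forall>x\<in>#real_spectrum (fblock m p D k). 0 < x" if "k < p" for k
    using True that unfolding tspectrum_def by (auto simp: set_mset_sum)
  then have "(\<Sum>k<p. sum_mset (sing_mset (mat_powr (fblock m p D k) (- q))))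
      = (\<Sum>k<p. sum_mset (image_mset (\<lambda>x. x powr (- q)) (real_spectrum (fblock m p D k))))"
    using sum_sing_mset_mat_powr_hermitian[OF fblock_carrier mat_adjoint_fblock[OF ts]] by simp
  also have "\<dots> = sum_mset (image_mset (\<lambda>x. x powr (- q)) (tspectrum m p D))"
    unfolding tspectrum_def image_mset_sum sum_mset_sum ..
  finally show ?thesis
    unfolding tnorm1_negpow_def using TPD_iff_tspectrum_pos[OF assms] True by simp
next
  case False
  then have "\<not> TPD m p D" using TPD_iff_tspectrum_pos[OF assms] by blast
  then show ?thesis unfolding tnorm1_negpow_def using False by (simp only: if_False)
qed

end

section \<open>Measurability of spectral functionals\<close>

lemma abs_sum_mset_image_diff_le:
  fixes f g :: "'b \<Rightarrow> real"
  assumes "\<And>x. x \<in># A \<Longrightarrow> \<bar>f x - g x\<bar> \<le> e"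
  shows "\<bar>sum_mset (image_mset f A) - sum_mset (image_mset g A)\<bar> \<le> real (size A) * e"
  using assms
proof (induction A)
  case (add x A)
  then have "\<bar>f x - g x\<bar> \<le> e"
    and "\<bar>sum_mset (image_mset f A) - sum_mset (image_mset g A)\<bar> \<le> real (size A) * e" by auto
  then show ?case by (simp add: algebra_simps)
qed simp

lemma borel_measurable_sum_mset_continuous:
  fixes \<Lambda> :: "'a \<Rightarrow> real multiset" and f :: "real \<Rightarrow> real"
  assumes rng: "\<And>\<tau>. set_mset (\<Lambda> \<tau>) \<subseteq> {a..b}"
    and poly: "\<And>P. real_polynomial_function P \<Longrightarrow> (\<lambda>\<tau>. sum_mset (image_mset P (\<Lambda> \<tau>))) \<in> borel_measurable N"
    and f: "continuous_on {a..b} f"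
  shows "(\<lambda>\<tau>. sum_mset (image_mset f (\<Lambda> \<tau>))) \<in> borel_measurable N"
proof -
  have "\<exists>P. real_polynomial_function P \<and> (\<forall>x\<in>{a..b}. \<bar>f x - P x\<bar> < inverse (real (Suc k)))" for k
  proof -
    obtain P where "real_polynomial_function P" "\<And>x. x \<in> {a..b} \<Longrightarrow> \<bar>f x - P x\<bar> < inverse (real (Suc k))"
      using Stone_Weierstrass_real_polynomial_function[OF compact_Icc f, of "inverse (real (Suc k))"] by auto
    then show ?thesis by blast
  qed
  then obtain P where P: "\<And>k. real_polynomial_function (P k)"
    and approx: "\<And>k x. x \<in> {a..b} \<Longrightarrow> \<bar>f x - P k x\<bar> < inverse (real (Suc k))"
    by metis
  show ?thesis
  proof (rule borel_measurable_LIMSEQ_real[OF _ poly[OF P]])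
    fix \<tau>
    define S where "S g = sum_mset (image_mset g (\<Lambda> \<tau>))" for g :: "real \<Rightarrow> real"
    define e where "e k = real (size (\<Lambda> \<tau>)) * inverse (real (Suc k))" for k
    have e: "e \<longlonglongrightarrow> 0"
      unfolding e_def by (rule tendsto_mult_right_zero[OF LIMSEQ_inverse_real_of_nat])
    have bound: "\<bar>S (P k) - S f\<bar> \<le> e k" for k
      unfolding S_def e_def using rng approx
      by (intro abs_sum_mset_image_diff_le) (fastforce simp: abs_minus_commute intro: less_imp_le)
    have "S f - e k \<le> S (P k)" "S (P k) \<le> S f + e k" for k
      using bound[of k] by (simp_all add: abs_le_iff)
    then have "\<forall>\<^sub>F k in sequentially. S f - e k \<le> S (P k)"
      "\<forall>\<^sub>F k in sequentially. S (P k) \<le> S f + e k" by simp_all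
    moreover have "(\<lambda>k. S f - e k) \<longlonglongrightarrow> S f" "(\<lambda>k. S f + e k) \<longlonglongrightarrow> S f"
      using tendsto_diff[OF tendsto_const e] tendsto_add[OF tendsto_const e] by simp_all
    ultimately show "(\<lambda>k. S (P k)) \<longlonglongrightarrow> S f" by (rule tendsto_sandwich)
  qed
qed

context
  fixes \<nu> :: "'a::metric_space measure" and D :: "'a \<Rightarrow> nat \<Rightarrow> real mat" and m p :: nat
  assumes sets: "sets \<nu> = sets borel"
    and cont: "\<And>j a b. j < p \<Longrightarrow> a < m \<Longrightarrow> b < m \<Longrightarrow> continuous_on UNIV (\<lambda>\<tau>. D \<tau> j $$ (a, b))"
    and ts: "\<And>\<tau>. tsym m p (D \<tau>)"
begin

lemma borel_measurable_fblock_entry: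
  assumes a: "a < m" and b: "b < m"
  shows "(\<lambda>\<tau>. fblock m p (D \<tau>) k $$ (a,b)) \<in> borel_measurable \<nu>"
proof -
  have "continuous_on UNIV (\<lambda>\<tau>. \<Sum>j<p. cis (- 2 * pi * real j * real k / real p) * complex_of_real (D \<tau> j $$ (a,b)))"
    by (intro continuous_intros) (auto intro: cont a b)
  then have "(\<lambda>\<tau>. \<Sum>j<p. cis (- 2 * pi * real j * real k / real p) * complex_of_real (D \<tau> j $$ (a,b)))
      \<in> borel_measurable \<nu>"
    unfolding measurable_cong_sets[OF sets refl] by (rule borel_measurable_continuous_onI)
  then show ?thesis unfolding fblock_def using a b by simp
qed

lemma borel_measurable_fblock_power_entry:
  assumes "a < m" and "b < m"
  shows "(\<lambda>\<tau>. (fblock m p (D \<tau>) k ^\<^sub>m j) $$ (a,b)) \<in> borel_measurable \<nu>"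
  using assms
proof (induction j arbitrary: a b)
  case 0
  then show ?case by (simp add: fblock_def)
next
  case (Suc j)
  have "fblock m p (D \<tau>) k ^\<^sub>m j \<in> carrier_mat m m" for \<tau>
    by (rule carrier_matI) (simp_all add: fblock_def)
  then have "(fblock m p (D \<tau>) k ^\<^sub>m Suc j) $$ (a,b)
      = (\<Sum>l<m. (fblock m p (D \<tau>) k ^\<^sub>m j) $$ (a,l) * fblock m p (D \<tau>) k $$ (l,b))" for \<tau>
    using index_mult_mat_sum[OF _ fblock_carrier Suc.prems] by simp
  then show ?case
    by (simp only:) (intro borel_measurable_sum borel_measurable_times Suc.IH
        borel_measurable_fblock_entry Suc.prems; simp)
qed

lemma borel_measurable_tspectrum_poly:
  assumes "real_polynomial_function P"
  shows "(\<lambda>\<tau>. sum_mset (image_mset P (tspectrum m p (D \<tau>)))) \<in> borel_measurable \<nu>"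
proof -
  obtain c N where P: "P = (\<lambda>x. \<Sum>i\<le>N. c i * x ^ i)"
    using assms unfolding real_polynomial_function_iff_sum by blast
  have "(\<lambda>\<tau>. Re ((fblock m p (D \<tau>) k ^\<^sub>m j) $$ (i,i))) \<in> borel_measurable \<nu>" if "i < m" for i j k
    using measurable_compose[OF borel_measurable_fblock_power_entry[OF that that] borel_measurable_Re] by simp
  then have power_sum: "(\<lambda>\<tau>. sum_mset (image_mset (\<lambda>x. x ^ j) (tspectrum m p (D \<tau>)))) \<in> borel_measurable \<nu>" for j
    unfolding power_sum_tspectrum[OF ts] Re_sum by (intro borel_measurable_sum) auto
  have eq: "sum_mset (image_mset P A) = (\<Sum>i\<le>N. c i * sum_mset (image_mset (\<lambda>x. x ^ i) A))" for A
    unfolding P by (induction A) (auto simp: sum.distrib algebra_simps)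
  show ?thesis unfolding eq
    by (intro borel_measurable_sum borel_measurable_times borel_measurable_const power_sum)
qed

end

lemma tendsto_sum_mset:
  fixes f :: "'b \<Rightarrow> 'c \<Rightarrow> real"
  assumes "\<And>x. x \<in># A \<Longrightarrow> ((\<lambda>q. f q x) \<longlongrightarrow> g x) F"
  shows "((\<lambda>q. sum_mset (image_mset (f q) A)) \<longlongrightarrow> sum_mset (image_mset g A)) F"
  using assms by (induction A) (auto intro!: tendsto_add)

lemma tendsto_prod_mset:
  fixes f :: "'b \<Rightarrow> 'c \<Rightarrow> real"
  assumes "\<And>x. x \<in># A \<Longrightarrow> ((\<lambda>q. f q x) \<longlongrightarrow> g x) F"
  shows "((\<lambda>q. prod_mset (image_mset (f q) A)) \<longlongrightarrow> prod_mset (image_mset g A)) F"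
  using assms by (induction A) (auto intro!: tendsto_mult)

lemma exp_sum_mset: "exp (sum_mset (image_mset f A)) = prod_mset (image_mset (\<lambda>x. exp (f x :: real)) A)"
  by (induction A) (auto simp: exp_add)

lemma prod_mset_pos: "(\<And>x. x \<in># A \<Longrightarrow> 0 < x) \<Longrightarrow> 0 < prod_mset (A :: real multiset)"
  by (induction A) auto

lemma ln_prod_mset:
  "(\<And>x. x \<in># A \<Longrightarrow> 0 < x) \<Longrightarrow> ln (prod_mset A) = sum_mset (image_mset ln (A :: real multiset))"
  by (induction A) (auto simp: ln_mult prod_mset_pos)

lemma sum_mset_nonneg: "(\<And>x. x \<in># A \<Longrightarrow> 0 \<le> f x) \<Longrightarrow> 0 \<le> sum_mset (image_mset f A :: real multiset)"
  by (induction A) auto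

lemma sum_mset_neg: "sum_mset (image_mset (\<lambda>x. - f x) A) = - sum_mset (image_mset f A :: real multiset)"
  by (induction A) auto

lemma sum_mset_diff_one_divide:
  fixes f :: "'b \<Rightarrow> real"
  shows "q \<noteq> 0 \<Longrightarrow> sum_mset (image_mset (\<lambda>x. (f x - 1) / q) A) = (sum_mset (image_mset f A) - size A) / q"
  by (induction A) (auto simp: field_simps)

lemma abs_sum_mset_le: "\<bar>sum_mset (image_mset f A)\<bar> \<le> sum_mset (image_mset (\<lambda>x. \<bar>f x :: real\<bar>) A)"
  by (induction A) (auto intro: order_trans[OF abs_triangle_ineq])

lemma exp_ge_tangent: "exp a * (1 + y - a) \<le> exp (y :: real)"
proof -
  have "exp a * (1 + (y - a)) \<le> exp a * exp (y - a)"
    using exp_ge_add_one_self[of "y - a"] by (intro mult_left_mono) auto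
  then show ?thesis by (simp add: exp_diff add_diff_eq)
qed

text \<open>Jensen's inequality, via the tangent line of \<open>exp\<close> at the mean.\<close>

lemma exp_mean_le_mean_exp:
  fixes y :: "'b \<Rightarrow> real"
  assumes sz: "size A = n" and n: "n > 0"
  shows "exp (sum_mset (image_mset y A) / n) \<le> sum_mset (image_mset (\<lambda>x. exp (y x)) A) / n"
proof -
  define S where "S = sum_mset (image_mset y A)"
  define a where "a = S / n"
  have "sum_mset (image_mset (\<lambda>x. exp a * (1 + y x - a)) A) \<le> sum_mset (image_mset (\<lambda>x. exp (y x)) A)"
    by (intro sum_mset_mono exp_ge_tangent)
  also have "sum_mset (image_mset (\<lambda>x. exp a * (1 + y x - a)) A) = exp a * (real (size A) + S - real (size A) * a)"
    unfolding S_def by (induction A) (auto simp: algebra_simps)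
  also have "real (size A) + S - real (size A) * a = n"
    unfolding a_def sz using n by simp
  finally show ?thesis unfolding S_def[symmetric] a_def[symmetric] using n by (simp add: le_divide_eq)
qed

lemma abs_ln_le:
  fixes x M :: real
  assumes x: "0 < x" "x \<le> M" and M: "1 \<le> M"
  shows "\<bar>ln x\<bar> \<le> x powr (-1) + ln M"
proof (cases "x \<le> 1")
  case True
  have "ln (1/x) \<le> 1/x - 1" using x by (intro ln_le_minus_one) auto
  then have "- ln x \<le> 1/x" using x by (simp add: ln_div)
  moreover have "ln x \<le> 0" "0 \<le> ln M" using True x M by simp_all
  moreover have "x powr (-1) = 1/x" using x by (simp add: powr_minus divide_inverse)
  ultimately show ?thesis by linarith
next
  case False
  then have "\<bar>ln x\<bar> \<le> ln M" using x by simp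
  then show ?thesis using x by (smt (verit) powr_gt_zero)
qed

lemma exp_mult_le_chord:
  fixes q a :: real
  assumes "0 \<le> q" "q \<le> 1"
  shows "exp (q * a) \<le> 1 + q * (exp a - 1)"
  using convex_onD[OF exp_convex, of q 0 a] assms by (simp add: algebra_simps)

text \<open>A bound on \<open>(x\<^sup>-\<^sup>q - 1)/q\<close> uniform in \<open>q \<in> (0,1]\<close>: convexity of \<open>q \<mapsto> x\<^sup>-\<^sup>q\<close> for \<open>x \<le> 1\<close>,
  and \<open>e\<^sup>t \<ge> 1 + t\<close> for \<open>x \<ge> 1\<close>.\<close>

lemma abs_powr_diff_quotient_le:
  fixes q x M :: real
  assumes q: "0 < q" "q \<le> 1" and x: "0 < x" "x \<le> M" and M: "1 \<le> M"
  shows "\<bar>(x powr (-q) - 1) / q\<bar> \<le> x powr (-1) + ln M"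
proof -
  define a where "a = - ln x"
  have xq: "x powr (-q) = exp (q * a)" and x1: "x powr (-1) = exp a"
    unfolding a_def using x by (simp_all add: powr_def)
  have lnM: "0 \<le> ln M" using M by simp
  show ?thesis
  proof (cases "a \<ge> 0")
    case True
    have lo: "0 \<le> exp (q * a) - 1" using True q by simp
    have hi: "exp (q * a) - 1 \<le> q * (exp a - 1)" using exp_mult_le_chord[of q a] q by simp
    have "\<bar>(exp (q * a) - 1) / q\<bar> = (exp (q * a) - 1) / q" using lo q by simp
    also have "\<dots> \<le> exp a - 1" using hi q by (simp add: divide_le_eq mult.commute)
    finally show ?thesis unfolding xq x1 using lnM by simp
  next
    case False
    have "q * a \<le> 0" using False q by (intro mult_nonneg_nonpos) auto
    then have hi: "exp (q * a) - 1 \<le> 0" by simp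
    have lo: "q * a \<le> exp (q * a) - 1" using exp_ge_add_one_self[of "q * a"] by linarith
    have "\<bar>(exp (q * a) - 1) / q\<bar> = (1 - exp (q * a)) / q" using hi q by (simp add: abs_div divide_simps)
    also have "\<dots> \<le> - a" using lo q by (simp add: divide_le_eq mult.commute)
    also have "- a \<le> ln M" unfolding a_def using x by simp
    finally show ?thesis unfolding xq x1 using exp_gt_zero[of a] by linarith
  qed
qed

lemma tendsto_exp_diff_quotient: "((\<lambda>q. (exp (q * a) - 1) / q) \<longlongrightarrow> (a :: real)) (at_right 0)"
proof -
  have "((\<lambda>q. exp (q * a)) has_field_derivative exp (0 * a) * a) (at 0 within {0<..})"
    by (auto intro!: derivative_eq_intros)
  then show ?thesis by (simp add: has_field_derivative_iff)
qed

section \<open>The limit for a random spectrum\<close>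

locale random_spectrum = prob_space \<nu> for \<nu> :: "'a measure" +
  fixes \<Lambda> :: "'a \<Rightarrow> real multiset" and n :: nat and B :: real
  assumes n_pos: "0 < n"
    and size_spectrum: "\<And>\<tau>. size (\<Lambda> \<tau>) = n"
    and spectrum_bounds: "\<And>\<tau> x. x \<in># \<Lambda> \<tau> \<Longrightarrow> 0 \<le> x \<and> x \<le> B"
    and one_le_B: "1 \<le> B"
    and borel_measurable_spectral_sum:
      "\<And>f :: real \<Rightarrow> real. continuous_on {0..B} f \<Longrightarrow> (\<lambda>\<tau>. sum_mset (image_mset f (\<Lambda> \<tau>))) \<in> borel_measurable \<nu>"
begin

definition nonsingular :: "'a set" where
  "nonsingular = {\<tau>. \<forall>x\<in>#\<Lambda> \<tau>. 0 < x}"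

definition trace_negpow :: "real \<Rightarrow> 'a \<Rightarrow> ennreal" where
  "trace_negpow q \<tau> =
    (if \<tau> \<in> nonsingular then ennreal (sum_mset (image_mset (\<lambda>x. x powr (-q)) (\<Lambda> \<tau>))) else \<infinity>)"

text \<open>On the singular set, a \<open>\<nu>\<close>-null set by \<open>AE_nonsingular\<close> below, both \<open>mean_negpow\<close>
  (through \<open>enn2real \<infinity> = 0\<close>) and \<open>mean_log\<close> (through \<open>ln 0 = 0\<close>) take junk values.\<close>

definition mean_negpow :: "real \<Rightarrow> 'a \<Rightarrow> real" where
  "mean_negpow q \<tau> = enn2real (trace_negpow q \<tau>) / n"

definition mean_log :: "'a \<Rightarrow> real" where
  "mean_log \<tau> = ln (prod_mset (\<Lambda> \<tau>)) / n"

lemma mean_negpow_nonsingular: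
  "\<tau> \<in> nonsingular \<Longrightarrow> mean_negpow q \<tau> = sum_mset (image_mset (\<lambda>x. x powr (-q)) (\<Lambda> \<tau>)) / n"
  unfolding mean_negpow_def trace_negpow_def by (simp add: sum_mset_nonneg)

lemma mean_negpow_nonneg: "0 \<le> mean_negpow q \<tau>"
  unfolding mean_negpow_def by simp

lemma nonsingular_iff_prod_pos: "\<tau> \<in> nonsingular \<longleftrightarrow> 0 < prod_mset (\<Lambda> \<tau>)"
proof
  assume "\<tau> \<in> nonsingular" then show "0 < prod_mset (\<Lambda> \<tau>)"
    unfolding nonsingular_def by (intro prod_mset_pos) auto
next
  assume "0 < prod_mset (\<Lambda> \<tau>)"
  then have "0 \<notin># \<Lambda> \<tau>" by (metis multi_member_split prod_mset.add_mset mult_zero_left less_irrefl)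
  then show "\<tau> \<in> nonsingular" unfolding nonsingular_def using spectrum_bounds[of _ \<tau>] by (auto simp: le_less)
qed

text \<open>Functions that are only continuous on \<open>(0, B]\<close> are reached by evaluating them at
  \<open>max x c\<^sub>k\<close> with cut-offs \<open>c\<^sub>k \<rightarrow> 0\<close>.\<close>

lemma eventually_max_cutoff:
  assumes "\<tau> \<in> nonsingular"
  shows "\<forall>\<^sub>F k in sequentially. \<forall>x\<in>#\<Lambda> \<tau>. max x (inverse (real (Suc k))) = x"
proof -
  have ne: "set_mset (\<Lambda> \<tau>) \<noteq> {}" using size_spectrum[of \<tau>] n_pos by auto
  define x0 where "x0 = Min (set_mset (\<Lambda> \<tau>))"
  have "0 < x0" unfolding x0_def using assms ne unfolding nonsingular_def by (subst Min_gr_iff) auto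
  then have "\<forall>\<^sub>F k in sequentially. inverse (real (Suc k)) < x0"
    by (rule order_tendstoD(2)[OF LIMSEQ_inverse_real_of_nat])
  then show ?thesis
    by (rule eventually_mono) (use ne in \<open>auto simp: max_def x0_def\<close>)
qed

lemma borel_measurable_prod_spectrum: "(\<lambda>\<tau>. prod_mset (\<Lambda> \<tau>)) \<in> borel_measurable \<nu>"
proof (rule borel_measurable_LIMSEQ_real)
  fix k
  define c where "c = inverse (real (Suc k))"
  have "0 < c" unfolding c_def by simp
  then have "continuous_on {0..B} (\<lambda>x. ln (max x c))"
    by (intro continuous_intros) (auto simp: max_def)
  from measurable_compose[OF borel_measurable_spectral_sum[OF this] borel_measurable_exp]
  have "(\<lambda>\<tau>. exp (sum_mset (image_mset (\<lambda>x. ln (max x c)) (\<Lambda> \<tau>)))) \<in> borel_measurable \<nu>" by simp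
  moreover have "exp (sum_mset (image_mset (\<lambda>x. ln (max x c)) (\<Lambda> \<tau>))) = prod_mset (image_mset (\<lambda>x. max x c) (\<Lambda> \<tau>))" for \<tau>
    unfolding exp_sum_mset using \<open>0 < c\<close>
    by (intro arg_cong[where f = prod_mset] image_mset_cong) (auto simp: max_def)
  ultimately show "(\<lambda>\<tau>. prod_mset (image_mset (\<lambda>x. max x c) (\<Lambda> \<tau>))) \<in> borel_measurable \<nu>" by simp
next
  fix \<tau>
  have "(\<lambda>k. prod_mset (image_mset (\<lambda>x. max x (inverse (real (Suc k)))) (\<Lambda> \<tau>)))
      \<longlonglongrightarrow> prod_mset (image_mset (\<lambda>x. max x 0) (\<Lambda> \<tau>))"
    by (intro tendsto_prod_mset tendsto_max tendsto_const LIMSEQ_inverse_real_of_nat)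
  also have "image_mset (\<lambda>x. max x 0) (\<Lambda> \<tau>) = image_mset id (\<Lambda> \<tau>)"
    by (intro image_mset_cong) (use spectrum_bounds[of _ \<tau>] in auto)
  also have "image_mset id (\<Lambda> \<tau>) = \<Lambda> \<tau>" by simp
  finally show "(\<lambda>k. prod_mset (image_mset (\<lambda>x. max x (inverse (real (Suc k)))) (\<Lambda> \<tau>))) \<longlonglongrightarrow> prod_mset (\<Lambda> \<tau>)" .
qed

lemma nonsingular_sets: "nonsingular \<inter> space \<nu> \<in> sets \<nu>"
proof -
  have "nonsingular \<inter> space \<nu> = {\<tau> \<in> space \<nu>. 0 < prod_mset (\<Lambda> \<tau>)}"
    using nonsingular_iff_prod_pos by auto
  also have "\<dots> \<in> sets \<nu>" by (intro borel_measurable_less borel_measurable_const borel_measurable_prod_spectrum)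
  finally show ?thesis .
qed

lemma borel_measurable_negpow_sum:
  "(\<lambda>\<tau>. if \<tau> \<in> nonsingular then sum_mset (image_mset (\<lambda>x. x powr (-q)) (\<Lambda> \<tau>)) else 0) \<in> borel_measurable \<nu>"
proof (rule borel_measurable_LIMSEQ_real)
  fix k
  have "0 < inverse (real (Suc k))" by simp
  then have "continuous_on {0..B} (\<lambda>x. max x (inverse (real (Suc k))) powr (-q))"
    by (intro continuous_intros) (auto simp: max_def)
  note cont = this
  show "(\<lambda>\<tau>. if \<tau> \<in> nonsingular then sum_mset (image_mset (\<lambda>x. max x (inverse (real (Suc k))) powr (-q)) (\<Lambda> \<tau>))
      else 0) \<in> borel_measurable \<nu>"
    by (rule measurable_If_set[OF borel_measurable_spectral_sum[OF cont] borel_measurable_const nonsingular_sets])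
next
  fix \<tau>
  show "(\<lambda>k. if \<tau> \<in> nonsingular then sum_mset (image_mset (\<lambda>x. max x (inverse (real (Suc k))) powr (-q)) (\<Lambda> \<tau>))
      else 0) \<longlonglongrightarrow> (if \<tau> \<in> nonsingular then sum_mset (image_mset (\<lambda>x. x powr (-q)) (\<Lambda> \<tau>)) else 0)"
  proof (cases "\<tau> \<in> nonsingular")
    case True
    show ?thesis
      by (rule tendsto_eventually, rule eventually_mono[OF eventually_max_cutoff[OF True]])
        (auto simp: True intro!: arg_cong[where f = sum_mset] image_mset_cong)
  qed simp
qed

lemma borel_measurable_trace_negpow: "trace_negpow q \<in> borel_measurable \<nu>"
proof -
  have "trace_negpow q = (\<lambda>\<tau>. if \<tau> \<in> nonsingular
      then ennreal (if \<tau> \<in> nonsingular then sum_mset (image_mset (\<lambda>x. x powr (-q)) (\<Lambda> \<tau>)) else 0) else \<infinity>)"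
    unfolding trace_negpow_def by auto
  then show ?thesis
    by (simp only:) (rule measurable_If_set[OF measurable_compose[OF borel_measurable_negpow_sum measurable_ennreal]
        borel_measurable_const nonsingular_sets])
qed

lemma borel_measurable_mean_negpow: "mean_negpow q \<in> borel_measurable \<nu>"
  unfolding mean_negpow_def[abs_def]
  by (intro borel_measurable_divide borel_measurable_const borel_measurable_enn2real borel_measurable_trace_negpow)

lemma borel_measurable_mean_log: "mean_log \<in> borel_measurable \<nu>"
  unfolding mean_log_def[abs_def]
  by (intro borel_measurable_divide borel_measurable_const borel_measurable_ln[OF borel_measurable_prod_spectrum])

lemma mean_log_nonsingular:
  "\<tau> \<in> nonsingular \<Longrightarrow> mean_log \<tau> = sum_mset (image_mset ln (\<Lambda> \<tau>)) / n"
  unfolding mean_log_def nonsingular_def by (subst ln_prod_mset) auto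

lemma abs_mean_log_le:
  assumes "\<tau> \<in> nonsingular" shows "\<bar>mean_log \<tau>\<bar> \<le> mean_negpow 1 \<tau> + ln B"
proof -
  have "\<bar>sum_mset (image_mset ln (\<Lambda> \<tau>))\<bar> \<le> sum_mset (image_mset (\<lambda>x. \<bar>ln x\<bar>) (\<Lambda> \<tau>))"
    by (rule abs_sum_mset_le)
  also have "\<dots> \<le> sum_mset (image_mset (\<lambda>x. x powr (-1) + ln B) (\<Lambda> \<tau>))"
    using assms spectrum_bounds[of _ \<tau>] one_le_B unfolding nonsingular_def
    by (intro sum_mset_mono abs_ln_le) auto
  also have "\<dots> = sum_mset (image_mset (\<lambda>x. x powr (-1)) (\<Lambda> \<tau>)) + n * ln B"
    by (simp add: sum_mset.distrib size_spectrum)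
  finally have "\<bar>sum_mset (image_mset ln (\<Lambda> \<tau>))\<bar> / n \<le> (sum_mset (image_mset (\<lambda>x. x powr (-1)) (\<Lambda> \<tau>)) + n * ln B) / n"
    using n_pos by (intro divide_right_mono) auto
  also have "\<dots> = mean_negpow 1 \<tau> + ln B"
    unfolding mean_negpow_nonsingular[OF assms] using n_pos by (simp add: add_divide_distrib)
  finally show ?thesis unfolding mean_log_nonsingular[OF assms] by simp
qed

end

locale integrable_random_spectrum = random_spectrum +
  assumes nn_integral_trace_negpow_finite: "\<And>q. q > 0 \<Longrightarrow> (\<integral>\<^sup>+\<tau>. trace_negpow q \<tau> \<partial>\<nu>) < \<infinity>"
begin

lemma AE_nonsingular: "AE \<tau> in \<nu>. \<tau> \<in> nonsingular"
proof -
  have "(\<integral>\<^sup>+\<tau>. trace_negpow 1 \<tau> \<partial>\<nu>) \<noteq> \<infinity>" using nn_integral_trace_negpow_finite[of 1] by simp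
  from nn_integral_noteq_infinite[OF borel_measurable_trace_negpow this] show ?thesis
    by (rule eventually_mono) (auto simp: trace_negpow_def split: if_splits)
qed

lemma trace_negpow_nonsingular:
  assumes "\<tau> \<in> nonsingular"
  shows "trace_negpow q \<tau> = ennreal (n * mean_negpow q \<tau>)"
proof -
  have "real n * (s / n) = s" for s using n_pos by simp
  then show ?thesis using assms unfolding mean_negpow_nonsingular[OF assms] trace_negpow_def by presburger
qed

lemma integrable_mean_negpow:
  assumes q: "q > 0" shows "integrable \<nu> (mean_negpow q)"
proof -
  have "integrable \<nu> (\<lambda>\<tau>. n * mean_negpow q \<tau>)"
  proof (rule integrableI_bounded)
    show "(\<lambda>\<tau>. n * mean_negpow q \<tau>) \<in> borel_measurable \<nu>"
      by (intro borel_measurable_times borel_measurable_const borel_measurable_mean_negpow)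
    have "(\<integral>\<^sup>+\<tau>. ennreal (norm (n * mean_negpow q \<tau>)) \<partial>\<nu>) = (\<integral>\<^sup>+\<tau>. trace_negpow q \<tau> \<partial>\<nu>)"
      using AE_nonsingular
      by (intro nn_integral_cong_AE) (auto elim!: eventually_mono simp: trace_negpow_nonsingular mean_negpow_nonneg)
    then show "(\<integral>\<^sup>+\<tau>. ennreal (norm (n * mean_negpow q \<tau>)) \<partial>\<nu>) < \<infinity>"
      using nn_integral_trace_negpow_finite[OF q] by simp
  qed
  from integrable_divide[OF this, of n] show ?thesis using n_pos by simp
qed

lemma enn2real_nn_integral_trace_negpow:
  "enn2real (\<integral>\<^sup>+\<tau>. trace_negpow q \<tau> / ennreal n \<partial>\<nu>) = (\<integral>\<tau>. mean_negpow q \<tau> \<partial>\<nu>)"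
proof -
  have "trace_negpow q \<tau> / ennreal n = ennreal (mean_negpow q \<tau>)" if "\<tau> \<in> nonsingular" for \<tau>
    using n_pos mean_negpow_nonneg[of q \<tau>]
    by (simp add: trace_negpow_nonsingular[OF that] divide_ennreal)
  then have "(\<integral>\<^sup>+\<tau>. trace_negpow q \<tau> / ennreal n \<partial>\<nu>) = (\<integral>\<^sup>+\<tau>. ennreal (mean_negpow q \<tau>) \<partial>\<nu>)"
    using AE_nonsingular by (intro nn_integral_cong_AE) (auto elim!: eventually_mono)
  then show ?thesis
    using integral_eq_nn_integral[OF borel_measurable_mean_negpow] mean_negpow_nonneg by simp
qed

lemma integrable_mean_log: "integrable \<nu> mean_log"
proof (rule Bochner_Integration.integrable_bound)
  show "integrable \<nu> (\<lambda>\<tau>. mean_negpow 1 \<tau> + ln B)"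
    by (intro Bochner_Integration.integrable_add integrable_mean_negpow integrable_const) simp
  show "AE \<tau> in \<nu>. norm (mean_log \<tau>) \<le> norm (mean_negpow 1 \<tau> + ln B)"
    using AE_nonsingular
  proof (rule eventually_mono)
    fix \<tau> assume "\<tau> \<in> nonsingular"
    moreover have "0 \<le> mean_negpow 1 \<tau> + ln B" using mean_negpow_nonneg[of 1 \<tau>] one_le_B by simp
    ultimately show "norm (mean_log \<tau>) \<le> norm (mean_negpow 1 \<tau> + ln B)" using abs_mean_log_le by simp
  qed
qed (rule borel_measurable_mean_log)

lemma integral_affine:
  fixes f :: "'a \<Rightarrow> real" assumes "integrable \<nu> f"
  shows "(\<integral>\<tau>. a + b * f \<tau> \<partial>\<nu>) = a + b * (\<integral>\<tau>. f \<tau> \<partial>\<nu>)"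
  using assms prob_space by (simp add: Bochner_Integration.integral_add lebesgue_integral_const)

lemma exp_integral_mean_log_le:
  assumes q: "q > 0"
  shows "exp (- q * (\<integral>\<tau>. mean_log \<tau> \<partial>\<nu>)) \<le> (\<integral>\<tau>. mean_negpow q \<tau> \<partial>\<nu>)"
proof -
  define I where "I = (\<integral>\<tau>. mean_log \<tau> \<partial>\<nu>)"
  define a where "a = exp (- q * I) * (1 + q * I)"
  define b where "b = - q * exp (- q * I)"
  have pointwise: "a + b * mean_log \<tau> \<le> mean_negpow q \<tau>" if \<tau>: "\<tau> \<in> nonsingular" for \<tau>
  proof -
    have pos: "\<And>x. x \<in># \<Lambda> \<tau> \<Longrightarrow> 0 < x" using \<tau> unfolding nonsingular_def by auto
    have "- q * mean_log \<tau> = sum_mset (image_mset (\<lambda>x. - q * ln x) (\<Lambda> \<tau>)) / n"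
      unfolding mean_log_nonsingular[OF \<tau>] sum_mset_distrib_left[symmetric] by simp
    then have "exp (- q * mean_log \<tau>) \<le> sum_mset (image_mset (\<lambda>x. exp (- q * ln x)) (\<Lambda> \<tau>)) / n"
      using exp_mean_le_mean_exp[OF size_spectrum n_pos] by simp
    also have "\<dots> = mean_negpow q \<tau>"
      unfolding mean_negpow_nonsingular[OF \<tau>] using pos
      by (intro arg_cong[where f = "\<lambda>s. s / real n"] arg_cong[where f = sum_mset] image_mset_cong)
        (simp add: powr_def less_imp_neq[symmetric])
    finally show ?thesis
      using exp_ge_tangent[of "- q * I" "- q * mean_log \<tau>"] unfolding a_def b_def by (simp add: algebra_simps)
  qed
  have "(\<integral>\<tau>. a + b * mean_log \<tau> \<partial>\<nu>) \<le> (\<integral>\<tau>. mean_negpow q \<tau> \<partial>\<nu>)"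
    using integrable_mean_log integrable_mean_negpow[OF q] AE_nonsingular
    by (intro integral_mono_AE) (auto elim!: eventually_mono intro: pointwise)
  also have "(\<integral>\<tau>. a + b * mean_log \<tau> \<partial>\<nu>) = exp (- q * I)"
    unfolding integral_affine[OF integrable_mean_log] I_def[symmetric] a_def b_def by (simp add: algebra_simps)
  finally show ?thesis unfolding I_def .
qed

definition negpow_quotient :: "real \<Rightarrow> 'a \<Rightarrow> real" where
  "negpow_quotient q \<tau> = (mean_negpow q \<tau> - 1) / q"

lemma integral_negpow_quotient:
  assumes q: "q > 0"
  shows "(\<integral>\<tau>. negpow_quotient q \<tau> \<partial>\<nu>) = ((\<integral>\<tau>. mean_negpow q \<tau> \<partial>\<nu>) - 1) / q"
proof -
  have "negpow_quotient q \<tau> = - 1 / q + (1 / q) * mean_negpow q \<tau>" for \<tau>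
    unfolding negpow_quotient_def by (simp add: diff_divide_distrib)
  then have eq: "negpow_quotient q = (\<lambda>\<tau>. - 1 / q + (1 / q) * mean_negpow q \<tau>)" by (intro ext)
  show ?thesis unfolding eq integral_affine[OF integrable_mean_negpow[OF q]] using q by (simp add: field_simps)
qed

lemma negpow_quotient_nonsingular:
  assumes \<tau>: "\<tau> \<in> nonsingular" and q: "q \<noteq> 0"
  shows "negpow_quotient q \<tau> = sum_mset (image_mset (\<lambda>x. (x powr (-q) - 1) / q) (\<Lambda> \<tau>)) / n"
proof -
  define S where "S = sum_mset (image_mset (\<lambda>x. x powr (-q)) (\<Lambda> \<tau>))"
  have "(S / n - 1) / q = (S - n) / q / n" using n_pos by (simp add: field_simps)
  then show ?thesis
    unfolding negpow_quotient_def mean_negpow_nonsingular[OF \<tau>] sum_mset_diff_one_divide[OF q] size_spectrum S_def .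
qed

lemma tendsto_negpow_quotient:
  assumes \<tau>: "\<tau> \<in> nonsingular"
  shows "((\<lambda>q. negpow_quotient q \<tau>) \<longlongrightarrow> - mean_log \<tau>) (at_right 0)"
proof -
  have pos: "\<And>x. x \<in># \<Lambda> \<tau> \<Longrightarrow> 0 < x" using \<tau> unfolding nonsingular_def by auto
  have "((\<lambda>q. sum_mset (image_mset (\<lambda>x. (exp (q * (- ln x)) - 1) / q) (\<Lambda> \<tau>)) / n)
      \<longlongrightarrow> sum_mset (image_mset (\<lambda>x. - ln x) (\<Lambda> \<tau>)) / n) (at_right 0)"
    by (intro tendsto_divide tendsto_const tendsto_sum_mset tendsto_exp_diff_quotient) (use n_pos in simp)
  also have "sum_mset (image_mset (\<lambda>x. - ln x) (\<Lambda> \<tau>)) / n = - mean_log \<tau>"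
    unfolding mean_log_nonsingular[OF \<tau>] sum_mset_neg by simp
  finally show ?thesis
  proof (rule tendsto_cong[THEN iffD1, rotated])
    have "sum_mset (image_mset (\<lambda>x. (exp (q * (- ln x)) - 1) / q) (\<Lambda> \<tau>))
        = sum_mset (image_mset (\<lambda>x. (x powr (-q) - 1) / q) (\<Lambda> \<tau>))" for q
      using pos by (intro arg_cong[where f = sum_mset] image_mset_cong) (simp add: powr_def less_imp_neq[symmetric])
    note eq = this
    show "\<forall>\<^sub>F q in at_right 0. sum_mset (image_mset (\<lambda>x. (exp (q * (- ln x)) - 1) / q) (\<Lambda> \<tau>)) / n
        = negpow_quotient q \<tau>"
      using eventually_at_right_less[of 0]
    proof (rule eventually_mono)
      fix q :: real assume "0 < q"
      then show "sum_mset (image_mset (\<lambda>x. (exp (q * (- ln x)) - 1) / q) (\<Lambda> \<tau>)) / n = negpow_quotient q \<tau>"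
        unfolding eq negpow_quotient_nonsingular[OF \<tau> less_imp_neq[OF \<open>0 < q\<close>, symmetric]] by simp
    qed
  qed
qed

lemma abs_negpow_quotient_le:
  assumes \<tau>: "\<tau> \<in> nonsingular" and q: "0 < q" "q \<le> 1"
  shows "\<bar>negpow_quotient q \<tau>\<bar> \<le> mean_negpow 1 \<tau> + ln B"
proof -
  have "\<bar>sum_mset (image_mset (\<lambda>x. (x powr (-q) - 1) / q) (\<Lambda> \<tau>))\<bar>
      \<le> sum_mset (image_mset (\<lambda>x. \<bar>(x powr (-q) - 1) / q\<bar>) (\<Lambda> \<tau>))"
    by (rule abs_sum_mset_le)
  also have "\<dots> \<le> sum_mset (image_mset (\<lambda>x. x powr (-1) + ln B) (\<Lambda> \<tau>))"
    using \<tau> spectrum_bounds[of _ \<tau>] one_le_B unfolding nonsingular_def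
    by (intro sum_mset_mono abs_powr_diff_quotient_le[OF q]) auto
  also have "\<dots> = sum_mset (image_mset (\<lambda>x. x powr (-1)) (\<Lambda> \<tau>)) + n * ln B"
    by (simp add: sum_mset.distrib size_spectrum)
  finally have "\<bar>sum_mset (image_mset (\<lambda>x. (x powr (-q) - 1) / q) (\<Lambda> \<tau>))\<bar> / n
      \<le> (sum_mset (image_mset (\<lambda>x. x powr (-1)) (\<Lambda> \<tau>)) + n * ln B) / n"
    using n_pos by (intro divide_right_mono) auto
  also have "\<dots> = mean_negpow 1 \<tau> + ln B"
    unfolding mean_negpow_nonsingular[OF \<tau>] using n_pos by (simp add: add_divide_distrib)
  finally show ?thesis using q unfolding negpow_quotient_nonsingular[OF \<tau> less_imp_neq[OF q(1), symmetric]] by simp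
qed

lemma tendsto_integral_negpow_quotient:
  "((\<lambda>q. \<integral>\<tau>. negpow_quotient q \<tau> \<partial>\<nu>) \<longlongrightarrow> - (\<integral>\<tau>. mean_log \<tau> \<partial>\<nu>)) (at_right 0)"
proof -
  have "((\<lambda>t. \<integral>\<tau>. negpow_quotient (inverse t) \<tau> \<partial>\<nu>) \<longlongrightarrow> (\<integral>\<tau>. - mean_log \<tau> \<partial>\<nu>)) at_top"
  proof (rule integral_dominated_convergence_at_top)
    show "AE \<tau> in \<nu>. ((\<lambda>t. negpow_quotient (inverse t) \<tau>) \<longlongrightarrow> - mean_log \<tau>) at_top"
      using AE_nonsingular
      by (rule eventually_mono) (rule filterlim_compose[OF tendsto_negpow_quotient filterlim_inverse_at_right_top])
    show "\<forall>\<^sub>F t in at_top. AE \<tau> in \<nu>. norm (negpow_quotient (inverse t) \<tau>) \<le> mean_negpow 1 \<tau> + ln B"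
      using eventually_ge_at_top[of "1::real"]
    proof (rule eventually_mono)
      fix t :: real assume "1 \<le> t"
      then have t: "0 < inverse t" "inverse t \<le> 1" by (auto simp: inverse_le_1_iff)
      show "AE \<tau> in \<nu>. norm (negpow_quotient (inverse t) \<tau>) \<le> mean_negpow 1 \<tau> + ln B"
        using AE_nonsingular by (rule eventually_mono) (simp add: abs_negpow_quotient_le[OF _ t])
    qed
  qed (auto intro!: borel_measurable_mean_log integrable_mean_negpow Bochner_Integration.integrable_add
      borel_measurable_divide borel_measurable_diff borel_measurable_mean_negpow
      simp: negpow_quotient_def[abs_def])
  then show ?thesis by (simp add: filterlim_at_right_to_top)
qed

theorem tendsto_ln_integral_mean_negpow:
  "((\<lambda>q. ln (enn2real (\<integral>\<^sup>+\<tau>. trace_negpow q \<tau> / ennreal n \<partial>\<nu>)) / q)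
     \<longlongrightarrow> - (\<integral>\<tau>. mean_log \<tau> \<partial>\<nu>)) (at_right 0)"
proof (rule tendsto_sandwich[OF _ _ tendsto_const tendsto_integral_negpow_quotient])
  have bounds: "- (\<integral>\<tau>. mean_log \<tau> \<partial>\<nu>) \<le> ln (\<integral>\<tau>. mean_negpow q \<tau> \<partial>\<nu>) / q"
    "ln (\<integral>\<tau>. mean_negpow q \<tau> \<partial>\<nu>) / q \<le> (\<integral>\<tau>. negpow_quotient q \<tau> \<partial>\<nu>)" if q: "q > 0" for q
  proof -
    have E: "0 < (\<integral>\<tau>. mean_negpow q \<tau> \<partial>\<nu>)"
      using exp_integral_mean_log_le[OF q] exp_gt_zero less_le_trans by blast
    have "- q * (\<integral>\<tau>. mean_log \<tau> \<partial>\<nu>) \<le> ln (\<integral>\<tau>. mean_negpow q \<tau> \<partial>\<nu>)"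
      using exp_integral_mean_log_le[OF q] E by (subst ln_exp[symmetric], subst ln_le_cancel_iff) auto
    then show "- (\<integral>\<tau>. mean_log \<tau> \<partial>\<nu>) \<le> ln (\<integral>\<tau>. mean_negpow q \<tau> \<partial>\<nu>) / q"
      using q by (simp add: le_divide_eq mult.commute)
    show "ln (\<integral>\<tau>. mean_negpow q \<tau> \<partial>\<nu>) / q \<le> (\<integral>\<tau>. negpow_quotient q \<tau> \<partial>\<nu>)"
      unfolding integral_negpow_quotient[OF q] using ln_le_minus_one[OF E] q by (simp add: divide_right_mono)
  qed
  show "\<forall>\<^sub>F q in at_right 0. - (\<integral>\<tau>. mean_log \<tau> \<partial>\<nu>)
      \<le> ln (enn2real (\<integral>\<^sup>+\<tau>. trace_negpow q \<tau> / ennreal n \<partial>\<nu>)) / q"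
    "\<forall>\<^sub>F q in at_right 0. ln (enn2real (\<integral>\<^sup>+\<tau>. trace_negpow q \<tau> / ennreal n \<partial>\<nu>)) / q
      \<le> (\<integral>\<tau>. negpow_quotient q \<tau> \<partial>\<nu>)"
    using eventually_at_right_less[of 0]
    by (auto elim!: eventually_mono simp: enn2real_nn_integral_trace_negpow bounds)
qed

end

lemma random_spectrum_tspectrum:
  fixes \<nu> :: "'a::metric_space measure"
  assumes mp: "m \<ge> 1" "p \<ge> 1" and prob: "prob_space \<nu>" and borel: "sets \<nu> = sets borel"
    and cont: "\<And>j a b. j < p \<Longrightarrow> a < m \<Longrightarrow> b < m \<Longrightarrow> continuous_on UNIV (\<lambda>\<tau>. D \<tau> j $$ (a, b))"
    and psd: "\<And>\<tau>. TPSD m p (D \<tau>)"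
    and bound: "\<And>\<tau>. tnorm_op m p (D \<tau>) \<le> B" and B: "1 \<le> B"
  shows "random_spectrum \<nu> (\<lambda>\<tau>. tspectrum m p (D \<tau>)) (m * p) B"
proof -
  have ts: "\<And>\<tau>. tsym m p (D \<tau>)" using psd unfolding TPSD_def by auto
  have range: "0 \<le> x \<and> x \<le> B" if "x \<in># tspectrum m p (D \<tau>)" for \<tau> x
    using TPSD_tspectrum_nonneg[OF ts psd that] tspectrum_le_tnorm_op[OF ts that] bound[of \<tau>] by simp
  have "\<And>\<tau>. set_mset (tspectrum m p (D \<tau>)) \<subseteq> {0..B}" using range by auto
  note spectral_sum = borel_measurable_sum_mset_continuous[OF this borel_measurable_tspectrum_poly[OF borel cont ts]]
  show ?thesis
  proof (intro random_spectrum.intro[OF prob] random_spectrum_axioms.intro)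
    show "0 < m * p" using mp by simp
  qed (use size_tspectrum[OF ts] range B spectral_sum in auto)
qed

theorem lemma15:
  fixes \<nu> :: "'a::metric_space measure"
    and D :: "'a \<Rightarrow> nat \<Rightarrow> real mat"
    and m p :: nat
  assumes m: "m \<ge> 1" and p: "p \<ge> 1"
    and sigma_compact: "\<exists>K :: nat \<Rightarrow> 'a set. (\<forall>n. compact (K n)) \<and> (\<Union>n. K n) = UNIV"
    and prob: "prob_space \<nu>" and borel: "sets \<nu> = sets borel"
    and cont: "\<And>j a b. j < p \<Longrightarrow> a < m \<Longrightarrow> b < m \<Longrightarrow> continuous_on UNIV (\<lambda>\<tau>. D \<tau> j $$ (a, b))"
    and psd: "\<And>\<tau>. TPSD m p (D \<tau>)"
    and bdd: "bdd_above (range (\<lambda>\<tau>. tnorm_op m p (D \<tau>)))"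
    and integ: "\<And>q. q > 0 \<Longrightarrow> (\<integral>\<^sup>+ \<tau>. tnorm1_negpow m p (D \<tau>) q \<partial>\<nu>) < \<infinity>"
  shows "((\<lambda>q. ln (enn2real (\<integral>\<^sup>+ \<tau>. tnorm1_negpow m p (D \<tau>) q / ennreal (real (m * p)) \<partial>\<nu>)) / q)
           \<longlongrightarrow> - (1 / real (m * p)) * (\<integral> \<tau>. ln (Re (tdet m p (D \<tau>))) \<partial>\<nu>)) (at_right 0)"
proof -
  have ts: "\<And>\<tau>. tsym m p (D \<tau>)" and tens: "\<And>\<tau>. tensor m p (D \<tau>)" using psd unfolding TPSD_def by auto
  obtain B0 where "\<And>\<tau>. tnorm_op m p (D \<tau>) \<le> B0" using bdd unfolding bdd_above_def by auto
  then have "\<And>\<tau>. tnorm_op m p (D \<tau>) \<le> max B0 1" by (meson max.coboundedI1)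
  then have spectrum: "random_spectrum \<nu> (\<lambda>\<tau>. tspectrum m p (D \<tau>)) (m * p) (max B0 1)"
    by (intro random_spectrum_tspectrum[OF m p prob borel cont psd]) auto
  interpret S: random_spectrum \<nu> "\<lambda>\<tau>. tspectrum m p (D \<tau>)" "m * p" "max B0 1" by (rule spectrum)
  have trace: "S.trace_negpow q \<tau> = tnorm1_negpow m p (D \<tau>) q" for q \<tau>
    unfolding S.trace_negpow_def S.nonsingular_def tnorm1_negpow_tspectrum[OF ts tens] by simp
  interpret integrable_random_spectrum \<nu> "\<lambda>\<tau>. tspectrum m p (D \<tau>)" "m * p" "max B0 1"
    by (intro integrable_random_spectrum.intro[OF spectrum] integrable_random_spectrum_axioms.intro)
      (use integ in \<open>simp add: trace\<close>)
  have "- (\<integral>\<tau>. S.mean_log \<tau> \<partial>\<nu>) = - (1 / real (m * p)) * (\<integral>\<tau>. ln (Re (tdet m p (D \<tau>))) \<partial>\<nu>)"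
    unfolding S.mean_log_def tdet_tspectrum[OF ts] by simp
  with tendsto_ln_integral_mean_negpow show ?thesis unfolding trace by simp
qed

end
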